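(* For every semistandard tableau $\mathbf m\in B(k,n,d)$, $\varphi(\mathrm{prom}(\mathbf m))=\mathrm{prom}(\varphi(\mathbf m))$.
   Context: Fix $1\le k<n$, $d\ge1$. For $p\in\{k,n-k\}$, $B(p,n,d)$ is the set of semistandard tableaux of rectangular shape with $p$ rows and $d$ columns and entries in $[n]$ (strictly increasing down columns, weakly increasing along rows); such a tableau is identified with the monomial $\prod_{i=1}^d[\mathbf a^{(i)}]$ in Plücker variables, $\mathbf a^{(i)}$ the set of entries of column $i$, so $\mathbf a^{(1)}\le\dots\le\mathbf a^{(d)}$ componentwise. $\varphi:B(k,n,d)\to B(n-k,n,d)$ sends $\prod_i[\mathbf a^{(i)}]$ to $\prod_i[[n]\setminus\mathbf a^{(i)}]$, i.e. the tableau whose columns, from left to right, are $[n]\setminus\mathbf a^{(d)},\dots,[n]\setminus\mathbf a^{(1)}$. Promotion $\mathrm{prom}$ on $B(p,n,d)$: if no entry equals $n$, add $1$ to all entries; otherwise replace each entry $n$ by an empty cell $\bullet$ and perform reverse jeu de taquin slides (an empty cell exchanges with its upper neighbor $c$ if $b\le c$ or the left neighbor $b$ does not exist, and with its left neighbor $b$ if $b>c$ or $c$ does not exist) until the empty cells form a top-left justified shape, then fill them with $0$ and add $1$ to all entries. *)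

theory Defs
  imports Main
begin

text \<open>A p x d tableau is a function T :: nat => nat => nat; T i j is the entry in
row i (0-based, top row 0) and column j (0-based, leftmost column 0).
Only the values on the box i < p, j < d matter.\<close>

definition semistandard :: "nat \<Rightarrow> nat \<Rightarrow> nat \<Rightarrow> (nat \<Rightarrow> nat \<Rightarrow> nat) \<Rightarrow> bool" where
  "semistandard p n d T \<longleftrightarrow>
     (\<forall>i<p. \<forall>j<d. T i j \<in> {1..n}) \<and>
     (\<forall>i j. i + 1 < p \<longrightarrow> j < d \<longrightarrow> T i j < T (i+1) j) \<and>
     (\<forall>i j. i < p \<longrightarrow> j + 1 < d \<longrightarrow> T i j \<le> T i (j+1))"

definition col_set :: "nat \<Rightarrow> (nat \<Rightarrow> nat \<Rightarrow> nat) \<Rightarrow> nat \<Rightarrow> nat set" where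
  "col_set p T j = {T r j | r. r < p}"

definition phi :: "nat \<Rightarrow> nat \<Rightarrow> nat \<Rightarrow> (nat \<Rightarrow> nat \<Rightarrow> nat) \<Rightarrow> (nat \<Rightarrow> nat \<Rightarrow> nat)" where
  "phi k n d T = (\<lambda>i j. if i < n - k \<and> j < d
      then sorted_list_of_set ({1..n} - col_set k T (d - 1 - j)) ! i else 0)"

text \<open>Empty cells are represented by the value 0 (all genuine entries are >= 1).
Swap the contents of two cells.\<close>
definition swap_cells :: "(nat \<Rightarrow> nat \<Rightarrow> nat) \<Rightarrow> nat \<Rightarrow> nat \<Rightarrow> nat \<Rightarrow> nat \<Rightarrow> (nat \<Rightarrow> nat \<Rightarrow> nat)" where
  "swap_cells T a b c e = (\<lambda>x y. if (x, y) = (a, b) then T c e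
                                 else if (x, y) = (c, e) then T a b else T x y)"

definition up_move :: "(nat \<Rightarrow> nat \<Rightarrow> nat) \<Rightarrow> nat \<Rightarrow> nat \<Rightarrow> bool" where
  "up_move T i j \<longleftrightarrow> 0 < i \<and> 0 < T (i-1) j \<and> (j = 0 \<or> T i (j-1) \<le> T (i-1) j)"

definition left_move :: "(nat \<Rightarrow> nat \<Rightarrow> nat) \<Rightarrow> nat \<Rightarrow> nat \<Rightarrow> bool" where
  "left_move T i j \<longleftrightarrow> 0 < j \<and> 0 < T i (j-1) \<and> (i = 0 \<or> T i (j-1) > T (i-1) j)"

function slide :: "(nat \<Rightarrow> nat \<Rightarrow> nat) \<Rightarrow> nat \<Rightarrow> nat \<Rightarrow> (nat \<Rightarrow> nat \<Rightarrow> nat)" where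
  "slide T i j =
     (if up_move T i j then slide (swap_cells T i j (i-1) j) (i-1) j
      else if left_move T i j then slide (swap_cells T i j i (j-1)) i (j-1)
      else T)"
  by auto
termination
  by (relation "measure (\<lambda>(T, i, j). i + j)") (auto simp: up_move_def left_move_def)

text \<open>The entries equal to n lie in the
bottom row (row p-1); they are replaced by empty cells, and reverse jeu de taquin slides
are performed into these empty cells one at a time, from left to right (the leftmost
empty cell is the only one that can be slid into first; each slide only moves cells
weakly up-left of it).\<close>
definition prom :: "nat \<Rightarrow> nat \<Rightarrow> nat \<Rightarrow> (nat \<Rightarrow> nat \<Rightarrow> nat) \<Rightarrow> (nat \<Rightarrow> nat \<Rightarrow> nat)" where
  "prom p n d T =
     (let T0 = (\<lambda>i j. if i < p \<and> j < d \<and> T i j = n then 0 else T i j);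
          S = foldl (\<lambda>S j. if T (p-1) j = n then slide S (p-1) j else S) T0 [0..<d]
      in (\<lambda>i j. if i < p \<and> j < d then S i j + 1 else 0))"

end

theory Submission
  imports Defs
begin

text \<open>Encode a tableau by the sets of entries of its columns, an empty cell being 0.  When
  an empty cell leaves column \<open>c\<close> to the left during a slide, it exchanges with the
  largest value \<open>b\<close> at which column \<open>c - 1\<close> has more entries
  \<open>\<ge> b\<close> than column \<open>c\<close>; this bracketing rule depends only on the two
  column sets.  Promotion is therefore a word of such exchanges applied to the column sets of
  the tableau with its entries \<open>n\<close> blanked, and the word is a grid read row by row.
  Complementing each column in \<open>{0..<n}\<close> and reversing the order of the columns
  preserves the bracketing rule and moves the exchange at \<open>c\<close> to \<open>d - c\<close>.
  Hence \<open>\<phi>\<close> carries the word of the promotion of \<open>m\<close> to the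
  grid word read row by row, whereas the promotion of \<open>\<phi> m\<close> reads the same
  grid column by column; the two readings differ only by swapping exchanges at distance at least
  2, which act on disjoint pairs of columns and commute.\<close>

section \<open>Exchanges between adjacent columns\<close>

definition bracket_excess :: "nat set \<Rightarrow> nat set \<Rightarrow> nat \<Rightarrow> int" where
  "bracket_excess L C x = int (card {y\<in>L. x \<le> y}) - int (card {y\<in>C. x \<le> y})"

definition exchange_applies :: "nat set \<Rightarrow> nat set \<Rightarrow> bool" where
  "exchange_applies L C \<longleftrightarrow>
     0 \<in> C \<and> 0 \<notin> L \<and> (\<exists>x. 0 < bracket_excess (L - {0}) (C - {0}) x)"

definition exchange_value :: "nat set \<Rightarrow> nat set \<Rightarrow> nat" where
  "exchange_value L C = (GREATEST x. 0 < bracket_excess (L - {0}) (C - {0}) x)"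

text \<open>Columns are given by their entry sets, 0 marking the hole: \<open>exchange c\<close>
  moves the hole from column \<open>c\<close> to column \<open>c - 1\<close> and the entry chosen by
  the bracketing rule the other way.\<close>

definition exchange :: "nat \<Rightarrow> (nat \<Rightarrow> nat set) \<Rightarrow> (nat \<Rightarrow> nat set)" where
  "exchange c A =
     (if exchange_applies (A (c-1)) (A c)
      then A(c-1 := insert 0 (A (c-1) - {exchange_value (A (c-1)) (A c)}),
             c := insert (exchange_value (A (c-1)) (A c)) (A c - {0}))
      else A)"

definition exchanges :: "nat list \<Rightarrow> (nat \<Rightarrow> nat set) \<Rightarrow> (nat \<Rightarrow> nat set)" where
  "exchanges w A = foldl (\<lambda>A c. exchange c A) A w"

lemma exchanges_Nil [simp]: "exchanges [] A = A"
  by (simp add: exchanges_def)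

lemma exchanges_Cons [simp]: "exchanges (c # w) A = exchanges w (exchange c A)"
  by (simp add: exchanges_def)

lemma exchanges_append [simp]: "exchanges (u @ w) A = exchanges w (exchanges u A)"
  by (simp add: exchanges_def)

lemma exchange_other_col: "j \<noteq> c - 1 \<Longrightarrow> j \<noteq> c \<Longrightarrow> exchange c A j = A j"
  by (simp add: exchange_def)

lemma exchange_local:
  assumes "A (c-1) = B (c-1)" "A c = B c" "j = c - 1 \<or> j = c"
  shows "exchange c A j = exchange c B j"
  using assms by (auto simp: exchange_def)

lemma exchange_commute:
  assumes "c' + 2 \<le> c"
  shows "exchange c (exchange c' A) = exchange c' (exchange c A)"
proof
  fix j
  consider "j = c - 1 \<or> j = c" | "j = c' - 1 \<or> j = c'" | "j \<notin> {c - 1, c, c' - 1, c'}"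
    by blast
  then show "exchange c (exchange c' A) j = exchange c' (exchange c A) j"
  proof cases
    case 1
    then have "exchange c (exchange c' A) j = exchange c A j"
      by (intro exchange_local) (use assms in \<open>auto intro!: exchange_other_col\<close>)
    also have "\<dots> = exchange c' (exchange c A) j"
      using assms 1 by (intro exchange_other_col [symmetric]) auto
    finally show ?thesis .
  next
    case 2
    then have "exchange c' (exchange c A) j = exchange c' A j"
      by (intro exchange_local) (use assms in \<open>auto intro!: exchange_other_col\<close>)
    also have "\<dots> = exchange c (exchange c' A) j"
      using assms 2 by (intro exchange_other_col [symmetric]) auto
    finally show ?thesis by simp
  next
    case 3
    then show ?thesis by (simp add: exchange_other_col)
  qed
qed

lemma exchanges_move_first_last:
  assumes "\<forall>c\<in>set w. x + 2 \<le> c"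
  shows "exchanges (x # w) A = exchanges (w @ [x]) A"
  using assms
proof (induction w arbitrary: A)
  case (Cons c w)
  have "exchanges (x # c # w) A = exchanges (x # w) (exchange c A)"
    using Cons.prems exchange_commute[of x c A] by simp
  also have "\<dots> = exchanges (w @ [x]) (exchange c A)"
    by (rule Cons.IH) (use Cons.prems in simp)
  finally show ?case by simp
qed simp

lemma exchanges_interleave:
  assumes "\<forall>i j. i < j \<longrightarrow> j < length us \<longrightarrow> (\<forall>c \<in> set (xs (us!j)). y (us!i) + 2 \<le> c)"
  shows "exchanges (concat (map (\<lambda>u. xs u @ [y u]) us)) A
       = exchanges (concat (map xs us) @ map y us) A"
  using assms
proof (induction us arbitrary: A)
  case (Cons u us)
  have IH: "exchanges (concat (map (\<lambda>u. xs u @ [y u]) us)) B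
          = exchanges (concat (map xs us) @ map y us) B" for B
    using Cons.prems by (intro Cons.IH) (metis Suc_mono length_Cons nth_Cons_Suc)
  have "\<forall>c\<in>set (concat (map xs us)). y u + 2 \<le> c"
  proof
    fix c assume "c \<in> set (concat (map xs us))"
    then obtain v where "v \<in> set us" "c \<in> set (xs v)" by auto
    then obtain j where "j < length us" "c \<in> set (xs (us!j))" by (metis in_set_conv_nth)
    then show "y u + 2 \<le> c" using Cons.prems[rule_format, of 0 "Suc j"] by simp
  qed
  then have "exchanges (y u # concat (map xs us)) B = exchanges (concat (map xs us) @ [y u]) B" for B
    by (rule exchanges_move_first_last)
  then show ?case
    using IH by simp
qed simp

text \<open>The grid of exchanges \<open>R - t + u\<close> (\<open>t < r\<close>, \<open>u < s\<close>) read
  by rows or by columns; passing from one reading to the other only swaps exchanges at distance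
  at least 2.\<close>

definition grid_word_rows :: "nat \<Rightarrow> nat \<Rightarrow> nat \<Rightarrow> nat list" where
  "grid_word_rows R s r = concat (map (\<lambda>t. map (\<lambda>u. R - t + u) [0..<s]) [0..<r])"

definition grid_word_cols :: "nat \<Rightarrow> nat \<Rightarrow> nat \<Rightarrow> nat list" where
  "grid_word_cols R s r = concat (map (\<lambda>u. map (\<lambda>t. R - t + u) [0..<r]) [0..<s])"

lemma exchanges_grid_word_cols:
  "r \<le> R \<Longrightarrow> exchanges (grid_word_cols R s r) A = exchanges (grid_word_rows R s r) A"
proof (induction r arbitrary: A)
  case 0
  have "grid_word_cols R s 0 = []"
    by (induction s) (simp_all add: grid_word_cols_def)
  then show ?case
    by (simp add: grid_word_rows_def)
next
  case (Suc r)
  have "\<forall>i j. i < j \<longrightarrow> j < s \<longrightarrow> (\<forall>x\<in>{0..<r}. R - r + i + 2 \<le> R - x + j)"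
    using Suc.prems by auto
  then have "exchanges (grid_word_cols R s (Suc r)) A
     = exchanges (concat (map (\<lambda>u. map (\<lambda>t. R - t + u) [0..<r]) [0..<s]) @ map (\<lambda>u. R - r + u) [0..<s]) A"
    using exchanges_interleave[of "[0..<s]" "\<lambda>u. map (\<lambda>t. R - t + u) [0..<r]" "\<lambda>u. R - r + u" A]
    by (simp add: grid_word_cols_def)
  also have "\<dots> = exchanges (map (\<lambda>u. R - r + u) [0..<s]) (exchanges (grid_word_rows R s r) A)"
    using Suc by (simp add: grid_word_cols_def)
  also have "\<dots> = exchanges (grid_word_rows R s (Suc r)) A"
    by (simp add: grid_word_rows_def)
  finally show ?case .
qed

section \<open>Complementary columns\<close>

definition complementary_cols :: "nat \<Rightarrow> nat \<Rightarrow> (nat \<Rightarrow> nat set) \<Rightarrow> (nat \<Rightarrow> nat set) \<Rightarrow> bool" where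
  "complementary_cols n d A B \<longleftrightarrow> (\<forall>j<d. A j \<subseteq> {0..<n} \<and> B j = {0..<n} - A (d-1-j))"

lemma bracket_excess_complement:
  assumes "L \<subseteq> {1..<n}" "C \<subseteq> {1..<n}"
  shows "bracket_excess ({1..<n} - C) ({1..<n} - L) x = bracket_excess L C x"
proof -
  let ?N = "{y\<in>{1..<n}. x \<le> y}"
  have "card {y \<in> {1..<n} - X. x \<le> y} = card ?N - card {y\<in>X. x \<le> y}"
    and "card {y\<in>X. x \<le> y} \<le> card ?N" if "X \<subseteq> {1..<n}" for X
  proof -
    have "{y \<in> {1..<n} - X. x \<le> y} = ?N - {y\<in>X. x \<le> y}" "{y\<in>X. x \<le> y} \<subseteq> ?N"
      using that by auto
    then show "card {y \<in> {1..<n} - X. x \<le> y} = card ?N - card {y\<in>X. x \<le> y}"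
      "card {y\<in>X. x \<le> y} \<le> card ?N"
      by (simp_all add: card_Diff_subset card_mono finite_subset)
  qed
  with assms show ?thesis
    by (simp add: bracket_excess_def of_nat_diff)
qed

lemma bracket_excess_0:
  assumes "0 \<notin> L" "0 \<notin> C"
  shows "bracket_excess L C 0 = bracket_excess L C 1"
proof -
  have "{y\<in>X. 0 \<le> y} = {y\<in>X. 1 \<le> y}" if "0 \<notin> X" for X :: "nat set"
    using that by (auto simp: Suc_le_eq) (metis gr0I)
  with assms show ?thesis
    by (simp add: bracket_excess_def)
qed

lemma bracket_excess_beyond:
  assumes "L \<subseteq> {..<n}" "C \<subseteq> {..<n}" "n \<le> x"
  shows "bracket_excess L C x = 0"
proof -
  have "{y\<in>L. x \<le> y} = {}" "{y\<in>C. x \<le> y} = {}"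
    using assms by auto
  then show ?thesis
    unfolding bracket_excess_def by (simp only: card.empty)
qed

lemma exchange_value_bounds:
  assumes "L \<subseteq> {0..<n}" "C \<subseteq> {0..<n}" "\<exists>x. 0 < bracket_excess (L - {0}) (C - {0}) x"
  shows "0 < bracket_excess (L - {0}) (C - {0}) (exchange_value L C)"
    and "\<And>y. 0 < bracket_excess (L - {0}) (C - {0}) y \<Longrightarrow> y \<le> exchange_value L C"
    and "1 \<le> exchange_value L C" "exchange_value L C < n"
proof -
  let ?P = "\<lambda>x. 0 < bracket_excess (L - {0}) (C - {0}) x"
  obtain x where x: "?P x"
    using assms(3) by blast
  have below_n: "y < n" if "?P y" for y
  proof (rule ccontr)
    assume "\<not> y < n"
    then have "bracket_excess (L - {0}) (C - {0}) y = 0"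
      using assms(1,2) by (intro bracket_excess_beyond[of _ n]) auto
    with that show False
      by simp
  qed
  show P: "?P (exchange_value L C)"
    unfolding exchange_value_def
    by (rule GreatestI_nat[of ?P x n, OF x]) (simp add: below_n less_imp_le)
  show le: "\<And>y. ?P y \<Longrightarrow> y \<le> exchange_value L C"
    unfolding exchange_value_def
    by (rule Greatest_le_nat[of ?P _ n]) (simp_all add: below_n less_imp_le)
  show "exchange_value L C < n"
    using below_n[OF P] .
  have "?P (max x 1)"
  proof (cases "x = 0")
    case True
    then show ?thesis
      using x bracket_excess_0[of "L - {0}" "C - {0}"] by simp
  qed (use x in simp)
  then show "1 \<le> exchange_value L C"
    using le[of "max x 1"] by simp
qed

lemma exchange_applies_complement:
  assumes "L \<subseteq> {0..<n}" "C \<subseteq> {0..<n}" "0 < n"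
  shows "exchange_applies ({0..<n} - C) ({0..<n} - L) \<longleftrightarrow> exchange_applies L C"
    and "exchange_value ({0..<n} - C) ({0..<n} - L) = exchange_value L C"
proof -
  have "({0..<n} - X) - {0} = {1..<n} - (X - {0})" for X :: "nat set"
    by auto
  then have "bracket_excess (({0..<n} - C) - {0}) (({0..<n} - L) - {0}) x
      = bracket_excess (L - {0}) (C - {0}) x" for x
    by (simp only:) (rule bracket_excess_complement, use assms(1,2) in auto)
  then have excess: "bracket_excess (({0..<n} - C) - {0}) (({0..<n} - L) - {0})
      = bracket_excess (L - {0}) (C - {0})"
    by (simp add: fun_eq_iff)
  show "exchange_applies ({0..<n} - C) ({0..<n} - L) \<longleftrightarrow> exchange_applies L C"
    unfolding exchange_applies_def excess using assms(3) by auto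
  show "exchange_value ({0..<n} - C) ({0..<n} - L) = exchange_value L C"
    unfolding exchange_value_def excess ..
qed

lemma complementary_cols_move:
  assumes R: "complementary_cols n d A B" and c: "1 \<le> c" "c < d" and b: "1 \<le> b" "b < n"
  shows "complementary_cols n d
     (A(c-1 := insert 0 (A (c-1) - {b}), c := insert b (A c - {0})))
     (B(d-c-1 := insert 0 (B (d-c-1) - {b}), d-c := insert b (B (d-c) - {0})))"
    (is "complementary_cols n d ?A ?B")
  unfolding complementary_cols_def
proof (intro allI impI conjI)
  fix j assume j: "j < d"
  have A_sub: "A j \<subseteq> {0..<n}" if "j < d" for j
    using R that unfolding complementary_cols_def by blast
  have B_eq: "B j = {0..<n} - A (d-1-j)" if "j < d" for j
    using R that unfolding complementary_cols_def by blast
  show "?A j \<subseteq> {0..<n}"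
    using A_sub j c b by (simp add: subset_iff)
  consider "j = d - c - 1" | "j = d - c" | "j \<noteq> d - c - 1" "j \<noteq> d - c"
    by blast
  then show "?B j = {0..<n} - ?A (d-1-j)"
  proof cases
    case 1
    then have "?B j = insert 0 (({0..<n} - A c) - {b})" "?A (d-1-j) = insert b (A c - {0})"
      using c B_eq[OF j] by auto
    then show ?thesis
      using b A_sub[of c] c by auto
  next
    case 2
    then have "?B j = insert b (({0..<n} - A (c-1)) - {0})" "?A (d-1-j) = insert 0 (A (c-1) - {b})"
      using c B_eq[OF j] by auto
    then show ?thesis
      using b A_sub[of "c-1"] c by auto
  next
    case 3
    then have "d - 1 - j \<noteq> c" "d - 1 - j \<noteq> c - 1"
      using j c by auto
    then show ?thesis
      using 3 B_eq[OF j] by simp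
  qed
qed

lemma complementary_exchange:
  assumes R: "complementary_cols n d A B" and c: "1 \<le> c" "c < d" and n: "0 < n"
  shows "complementary_cols n d (exchange c A) (exchange (d-c) B)"
proof -
  have BL: "B (d-c-1) = {0..<n} - A c" and BC: "B (d-c) = {0..<n} - A (c-1)"
    using R[unfolded complementary_cols_def, rule_format, of "d-c-1"]
      R[unfolded complementary_cols_def, rule_format, of "d-c"] c
    by (simp_all add: Suc_diff_Suc)
  have A_sub: "A j \<subseteq> {0..<n}" if "j < d" for j
    using R that unfolding complementary_cols_def by blast
  have compl: "exchange_applies (B (d-c-1)) (B (d-c)) \<longleftrightarrow> exchange_applies (A (c-1)) (A c)"
    "exchange_value (B (d-c-1)) (B (d-c)) = exchange_value (A (c-1)) (A c)"
    unfolding BL BC using exchange_applies_complement[OF A_sub A_sub n, of "c-1" c] c by simp_all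
  show ?thesis
  proof (cases "exchange_applies (A (c-1)) (A c)")
    case False
    then have "exchange c A = A" "exchange (d-c) B = B"
      using compl(1) unfolding exchange_def by (simp_all only: if_False)
    then show ?thesis
      using R by simp
  next
    case True
    then have "\<exists>x. 0 < bracket_excess (A (c-1) - {0}) (A c - {0}) x"
      unfolding exchange_applies_def by blast
    then have "1 \<le> exchange_value (A (c-1)) (A c)" "exchange_value (A (c-1)) (A c) < n"
      using exchange_value_bounds(3,4)[OF A_sub A_sub] c by simp_all
    with True compl show ?thesis
      unfolding exchange_def by (simp only: if_True) (rule complementary_cols_move[OF R c])
  qed
qed

lemma complementary_exchanges:
  assumes "complementary_cols n d A B" "\<forall>c\<in>set w. 1 \<le> c \<and> c < d" "0 < n"
  shows "complementary_cols n d (exchanges w A) (exchanges (map (\<lambda>c. d - c) w) B)"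
  using assms
proof (induction w arbitrary: A B)
  case (Cons c w)
  then have "complementary_cols n d (exchange c A) (exchange (d-c) B)"
    by (intro complementary_exchange) auto
  then have "complementary_cols n d (exchanges w (exchange c A)) (exchanges (map (\<lambda>c. d - c) w) (exchange (d-c) B))"
    using Cons.IH Cons.prems by simp
  then show ?case
    by simp
qed simp

section \<open>Bracketing two adjacent columns\<close>

lemma consecutive_less_imp_less:
  fixes g :: "nat \<Rightarrow> nat"
  assumes "\<forall>i. i + 1 < m \<longrightarrow> g i < g (i+1)" "i < j" "j < m"
  shows "g i < g j"
  using assms(2,3)
proof (induction j)
  case (Suc j)
  then show ?case
    using assms(1) by (cases "i = j") (auto intro: less_trans)
qed simp

lemma inj_on_if_less_imp_less:
  fixes g :: "nat \<Rightarrow> nat"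
  assumes "\<forall>i j. i < j \<longrightarrow> i \<in> I \<longrightarrow> j \<in> I \<longrightarrow> g i < g j"
  shows "inj_on g I"
  using assms by (intro strict_mono_on_imp_inj_on strict_mono_onI) blast

lemma card_filter_image:
  assumes "inj_on g I"
  shows "card {y \<in> g ` I. P y} = card {i \<in> I. P (g i)}"
proof -
  have "{y \<in> g ` I. P y} = g ` {i \<in> I. P (g i)}"
    by auto
  moreover have "inj_on g {i \<in> I. P (g i)}"
    using assms by (rule inj_on_subset) auto
  ultimately show ?thesis
    by (simp add: card_image)
qed

text \<open>Column \<open>c - 1\<close> has strictly increasing entries \<open>l\<close>, column
  \<open>c\<close> has strictly increasing entries \<open>u\<close> except in the row \<open>q\<close> of
  the hole, which then climbs to row \<open>e\<close> and leaves to the left.  The next two lemmas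
  show that \<open>l e\<close>, the entry it exchanges with, is the value selected by
  \<open>exchange_value\<close>.\<close>

lemma bracket_excess_at_exit:
  fixes l u :: "nat \<Rightarrow> nat"
  assumes eq: "e \<le> q" "q < p"
    and l_less: "\<forall>i j. i < j \<longrightarrow> j < p \<longrightarrow> l i < l j"
    and u_less: "\<forall>i j. i < j \<longrightarrow> j < p \<longrightarrow> i \<noteq> q \<longrightarrow> j \<noteq> q \<longrightarrow> u i < u j"
    and exit: "e = 0 \<or> u (e-1) < l e"
  shows "0 < bracket_excess (l ` {..<p}) (u ` ({..<p} - {q})) (l e)"
proof -
  have "l e \<le> l i \<longleftrightarrow> e \<le> i" if "i < p" for i
    using l_less[rule_format, of i e] l_less[rule_format, of e i] that eq
    by (cases i e rule: linorder_cases) auto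
  then have "{i \<in> {..<p}. l e \<le> l i} = {e..<p}"
    by auto
  then have left: "card {i \<in> {..<p}. l e \<le> l i} = p - e"
    by simp
  have "{i \<in> {..<p} - {q}. l e \<le> u i} \<subseteq> {e..<p} - {q}"
  proof
    fix i assume i: "i \<in> {i \<in> {..<p} - {q}. l e \<le> u i}"
    have "e \<le> i"
    proof (rule ccontr)
      assume "\<not> e \<le> i"
      then have "e \<noteq> 0" "i \<le> e - 1" "e - 1 < p" "e - 1 \<noteq> q"
        using eq by auto
      then have "u i \<le> u (e-1)"
        using u_less[rule_format, of i "e-1"] i by (cases "i = e - 1") auto
      moreover have "u (e-1) < l e"
        using exit \<open>e \<noteq> 0\<close> by simp
      ultimately show False
        using i by simp
    qed
    then show "i \<in> {e..<p} - {q}"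
      using i by auto
  qed
  then have "card {i \<in> {..<p} - {q}. l e \<le> u i} \<le> p - e - 1"
    using card_mono[of "{e..<p} - {q}"] eq by fastforce
  moreover have "inj_on l {..<p}" "inj_on u ({..<p} - {q})"
    using l_less u_less by (auto intro!: inj_on_if_less_imp_less)
  ultimately show ?thesis
    unfolding bracket_excess_def using left eq by (simp add: card_filter_image)
qed

lemma bracket_excess_above_exit:
  fixes l u :: "nat \<Rightarrow> nat"
  assumes eq: "e \<le> q" "q < p" "l e < x"
    and l_less: "\<forall>i j. i < j \<longrightarrow> j < p \<longrightarrow> l i < l j"
    and u_less: "\<forall>i j. i < j \<longrightarrow> j < p \<longrightarrow> i \<noteq> q \<longrightarrow> j \<noteq> q \<longrightarrow> u i < u j"
    and climb: "\<forall>i. e < i \<longrightarrow> i \<le> q \<longrightarrow> l i \<le> u (i-1)"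
    and below: "\<forall>i. q < i \<longrightarrow> i < p \<longrightarrow> l i \<le> u i"
  shows "bracket_excess (l ` {..<p}) (u ` ({..<p} - {q})) x \<le> 0"
proof -
  let ?A = "{i \<in> {..<p}. x \<le> l i}"
  let ?B = "{i \<in> {..<p} - {q}. x \<le> u i}"
  let ?f = "\<lambda>i. if i \<le> q then i - 1 else i"
  have A_above: "e < i" if "i \<in> ?A" for i
    using that l_less[rule_format, of i e] eq by (cases "i < e") (auto simp: not_less_iff_gr_or_eq)
  have "inj_on ?f ?A"
  proof (rule inj_onI)
    fix i j assume "i \<in> ?A" "j \<in> ?A" "?f i = ?f j"
    moreover from this have "e < i" "e < j"
      by (simp_all add: A_above)
    ultimately show "i = j"
      by (auto split: if_splits)
  qed
  moreover have "?f ` ?A \<subseteq> ?B"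
  proof
    fix y assume "y \<in> ?f ` ?A"
    then obtain i where i: "i \<in> ?A" "y = ?f i"
      by blast
    have "e < i"
      using A_above[OF i(1)] .
    show "y \<in> ?B"
    proof (cases "i \<le> q")
      case True
      then show ?thesis
        using i \<open>e < i\<close> climb eq by force
    next
      case False
      then show ?thesis
        using i below[rule_format, of i] by fastforce
    qed
  qed
  ultimately have "card ?A \<le> card ?B"
    by (rule card_inj_on_le) simp
  moreover have "inj_on l {..<p}" "inj_on u ({..<p} - {q})"
    using l_less u_less by (auto intro!: inj_on_if_less_imp_less)
  ultimately show ?thesis
    unfolding bracket_excess_def by (simp add: card_filter_image)
qed

section \<open>Slides as sequences of exchanges\<close>

declare slide.simps [simp del]

definition shift_down :: "(nat \<Rightarrow> nat \<Rightarrow> nat) \<Rightarrow> nat \<Rightarrow> nat \<Rightarrow> nat \<Rightarrow> (nat \<Rightarrow> nat \<Rightarrow> nat)" where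
  "shift_down T c e i =
     (\<lambda>a b. if b = c \<and> e \<le> a \<and> a \<le> i then (if a = e then 0 else T (a-1) c) else T a b)"

lemma slide_up: "up_move T i j \<Longrightarrow> slide T i j = slide (swap_cells T i j (i-1) j) (i-1) j"
  by (subst slide.simps) simp

lemma slide_left:
  "\<not> up_move T i j \<Longrightarrow> left_move T i j \<Longrightarrow> slide T i j = slide (swap_cells T i j i (j-1)) i (j-1)"
  by (subst slide.simps) simp

lemma slide_stop: "\<not> up_move T i j \<Longrightarrow> \<not> left_move T i j \<Longrightarrow> slide T i j = T"
  by (subst slide.simps) simp

lemma shift_down_swap:
  assumes "e \<le> m" "T (Suc m) c = 0"
  shows "shift_down (swap_cells T (Suc m) c m c) c e m = shift_down T c e (Suc m)"
proof (intro ext)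
  fix a b
  consider "b \<noteq> c \<or> a < e \<or> Suc m < a" | "b = c" "e \<le> a" "a \<le> m" | "b = c" "a = Suc m"
    by linarith
  then show "shift_down (swap_cells T (Suc m) c m c) c e m a b = shift_down T c e (Suc m) a b"
    by cases (use assms in \<open>auto simp: shift_down_def swap_cells_def\<close>)
qed

lemma slide_climb:
  assumes "e \<le> i" "T i c = 0"
    and "\<forall>r. e < r \<longrightarrow> r \<le> i \<longrightarrow> 0 < T (r-1) c \<and> (c = 0 \<or> T r (c-1) \<le> T (r-1) c)"
  shows "slide T i c = slide (shift_down T c e i) e c"
  using assms
proof (induction i arbitrary: T)
  case 0
  then have "shift_down T c e 0 = T"
    by (auto simp: fun_eq_iff shift_down_def)
  with 0 show ?case
    by simp
next
  case (Suc m)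
  show ?case
  proof (cases "e = Suc m")
    case True
    with Suc.prems(2) have "shift_down T c e (Suc m) = T"
      by (auto simp: fun_eq_iff shift_down_def)
    with True show ?thesis
      by simp
  next
    case False
    with Suc.prems(1) have em: "e \<le> m"
      by simp
    let ?T = "swap_cells T (Suc m) c m c"
    have same: "?T a b = T a b" if "b \<noteq> c \<or> a < m" for a b
      using that by (auto simp: swap_cells_def)
    have "up_move T (Suc m) c"
      using Suc.prems(3)[rule_format, of "Suc m"] em unfolding up_move_def by auto
    then have "slide T (Suc m) c = slide ?T m c"
      by (simp add: slide_up)
    also have "\<dots> = slide (shift_down ?T c e m) e c"
    proof (rule Suc.IH)
      show "?T m c = 0"
        using Suc.prems(2) by (simp add: swap_cells_def)
      show "\<forall>r. e < r \<longrightarrow> r \<le> m \<longrightarrow> 0 < ?T (r-1) c \<and> (c = 0 \<or> ?T r (c-1) \<le> ?T (r-1) c)"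
      proof (intro allI impI)
        fix r assume r: "e < r" "r \<le> m"
        have "?T (r-1) c = T (r-1) c" "c \<noteq> 0 \<Longrightarrow> ?T r (c-1) = T r (c-1)"
          using r by (auto intro: same)
        then show "0 < ?T (r-1) c \<and> (c = 0 \<or> ?T r (c-1) \<le> ?T (r-1) c)"
          using Suc.prems(3)[rule_format, of r] r by (cases "c = 0") auto
      qed
    qed (rule em)
    also have "shift_down ?T c e m = shift_down T c e (Suc m)"
      using em Suc.prems(2) by (rule shift_down_swap)
    finally show ?thesis .
  qed
qed

lemma image_climbed_column:
  fixes e q p :: nat
  assumes "e \<le> q" "q < p"
  shows "(\<lambda>i. if i < e then g i else if i = e then v else if i \<le> q then g (i-1) else g i) ` {..<p}
       = insert v (g ` ({..<p} - {q}))" (is "?f ` _ = _")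
proof
  have "?f i \<in> insert v (g ` ({..<p} - {q}))" if "i < p" for i
  proof -
    consider "i < e" | "i = e" | "e < i" "i \<le> q" | "q < i"
      using assms by linarith
    then show ?thesis
    proof cases
      case 3
      then have "?f i = g (i-1)" "i - 1 \<in> {..<p} - {q}"
        using that by auto
      then show ?thesis
        by blast
    qed (use that assms in auto)
  qed
  then show "?f ` {..<p} \<subseteq> insert v (g ` ({..<p} - {q}))"
    by blast
  have g_in: "g i \<in> ?f ` {..<p}" if "i < p" "i \<noteq> q" for i
  proof (cases "e \<le> i \<and> i < q")
    case True
    show ?thesis
      by (rule image_eqI[where x="i+1"]) (use True assms in auto)
  next
    case False
    show ?thesis
      by (rule image_eqI[where x=i]) (use False that assms in auto)
  qed
  have v_in: "v \<in> ?f ` {..<p}"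
  proof (rule image_eqI)
    show "v = ?f e"
      by simp
  qed (use assms in simp)
  show "insert v (g ` ({..<p} - {q})) \<subseteq> ?f ` {..<p}"
    using g_in v_in by blast
qed

lemma col_set_eq_image: "col_set p T j = (\<lambda>i. T i j) ` {..<p}"
  by (auto simp: col_set_def)

text \<open>The state of \<open>prom\<close> after the holes of columns \<open>j0, \<dots>, j0 + t - 1\<close>
  (the columns of the bottom row holding \<open>n\<close>) have been slid: the finished holes sit in
  the first \<open>t\<close> cells of the top row, the pending ones in the bottom row from column
  \<open>j0 + t\<close> on.  The last clause records the path \<open>h\<close> of the previous
  slide, \<open>h c\<close> being the row where it entered column \<open>c\<close>: left of that
  path the entries are bounded by their upper right neighbours, which forces the next hole to
  reach the top row exactly in column \<open>t\<close>.\<close>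

definition sliding_inv :: "nat \<Rightarrow> nat \<Rightarrow> nat \<Rightarrow> nat \<Rightarrow> nat \<Rightarrow> (nat \<Rightarrow> nat \<Rightarrow> nat) \<Rightarrow> bool" where
  "sliding_inv p n d j0 t S \<longleftrightarrow>
    (\<forall>i<p. \<forall>j<d. (S i j = 0 \<longleftrightarrow> (i = 0 \<and> j < t) \<or> (i = p - 1 \<and> j0 + t \<le> j))) \<and>
    (\<forall>i<p. \<forall>j<d. S i j < n) \<and>
    (\<forall>i j. i + 1 < p \<longrightarrow> j < d \<longrightarrow> S (i+1) j \<noteq> 0 \<longrightarrow> S i j < S (i+1) j) \<and>
    (\<forall>i j. i < p \<longrightarrow> j + 1 < d \<longrightarrow> S i (j+1) \<noteq> 0 \<longrightarrow> S i j \<le> S i (j+1)) \<and>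
    (0 < t \<longrightarrow> (\<exists>h. h (j0 + t - 1) = p - 1 \<and>
       (\<forall>c i. t - 1 \<le> c \<longrightarrow> c \<le> j0 + t - 1 \<longrightarrow> c + 1 < d \<longrightarrow> 0 < i \<longrightarrow> i \<le> h c \<longrightarrow>
          (c = t - 1 \<or> h (c - 1) < i) \<longrightarrow> S i c \<le> S (i-1) (c+1))))"

text \<open>With the hole in row \<open>e\<close> of column \<open>c\<close>, the entries of column
  \<open>c\<close> above it are still those of \<open>S\<close>; \<open>exits_left S c e\<close> says that
  the hole moves left from there.\<close>

definition exits_left :: "(nat \<Rightarrow> nat \<Rightarrow> nat) \<Rightarrow> nat \<Rightarrow> nat \<Rightarrow> bool" where
  "exits_left S c e \<longleftrightarrow> e = 0 \<or> (0 < c \<and> S (e-1) c < S e (c-1))"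

definition exit_row :: "(nat \<Rightarrow> nat \<Rightarrow> nat) \<Rightarrow> nat \<Rightarrow> nat \<Rightarrow> nat" where
  "exit_row S c i = (GREATEST e. e \<le> i \<and> exits_left S c e)"

lemma exit_row_le: "exit_row S c i \<le> i"
  and exits_left_exit_row: "exits_left S c (exit_row S c i)"
  and le_exit_row: "e \<le> i \<Longrightarrow> exits_left S c e \<Longrightarrow> e \<le> exit_row S c i"
proof -
  let ?P = "\<lambda>e. e \<le> i \<and> exits_left S c e"
  have "?P 0"
    by (simp add: exits_left_def)
  then have "?P (exit_row S c i)"
    unfolding exit_row_def by (rule GreatestI_nat[of ?P 0 i]) simp
  then show "exit_row S c i \<le> i" "exits_left S c (exit_row S c i)"
    by simp_all
  show "e \<le> i \<Longrightarrow> exits_left S c e \<Longrightarrow> e \<le> exit_row S c i"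
    unfolding exit_row_def by (rule Greatest_le_nat[of ?P e i]) simp_all
qed

fun entry_row :: "(nat \<Rightarrow> nat \<Rightarrow> nat) \<Rightarrow> nat \<Rightarrow> nat \<Rightarrow> nat \<Rightarrow> nat" where
  "entry_row S c0 q 0 = q"
| "entry_row S c0 q (Suc k) = exit_row S (c0 - k) (entry_row S c0 q k)"

lemma entry_row_le: "entry_row S c0 q k \<le> q"
  by (induction k) (auto intro: le_trans[OF exit_row_le])

text \<open>The hole starts in the bottom row of column \<open>j0 + t\<close>, enters column
  \<open>c\<close> in row \<open>row_in c\<close>, climbs to row \<open>row_out c\<close> and leaves to
  the left, until it stops in the top row of column \<open>t\<close>.  \<open>slid\<close> is the
  result of the slide and \<open>sliding c\<close> the tableau at the moment the hole enters
  column \<open>c\<close>.\<close>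

locale hole_slide =
  fixes p n d j0 t :: nat and S :: "nat \<Rightarrow> nat \<Rightarrow> nat"
  assumes inv: "sliding_inv p n d j0 t S" and p_pos: "0 < p" and hole_col: "j0 + t < d"
begin

definition row_in :: "nat \<Rightarrow> nat" where
  "row_in c = entry_row S (j0+t) (p-1) (j0+t-c)"

definition row_out :: "nat \<Rightarrow> nat" where
  "row_out c = exit_row S c (row_in c)"

definition slid :: "nat \<Rightarrow> nat \<Rightarrow> nat" where
  "slid = (\<lambda>i j. if t \<le> j \<and> j \<le> j0+t then
      (if i < row_out j then S i j else if i = row_out j then (if j = t then 0 else S i (j-1))
       else if i \<le> row_in j then S (i-1) j else S i j) else S i j)"

definition sliding :: "nat \<Rightarrow> nat \<Rightarrow> nat \<Rightarrow> nat" where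
  "sliding c = (\<lambda>i j. if c < j then slid i j else if j = c \<and> i = row_in c then 0 else S i j)"

lemma S_zero_iff: "i < p \<Longrightarrow> j < d \<Longrightarrow> S i j = 0 \<longleftrightarrow> (i = 0 \<and> j < t) \<or> (i = p - 1 \<and> j0 + t \<le> j)"
  using inv[unfolded sliding_inv_def, THEN conjunct1] by simp

lemma S_less_n: "i < p \<Longrightarrow> j < d \<Longrightarrow> S i j < n"
  using inv[unfolded sliding_inv_def, THEN conjunct2, THEN conjunct1] by simp

lemma S_col_less: "i + 1 < p \<Longrightarrow> j < d \<Longrightarrow> S (i+1) j \<noteq> 0 \<Longrightarrow> S i j < S (i+1) j"
  using inv[unfolded sliding_inv_def, THEN conjunct2, THEN conjunct2, THEN conjunct1] by simp

lemma S_row_le: "i < p \<Longrightarrow> j + 1 < d \<Longrightarrow> S i (j+1) \<noteq> 0 \<Longrightarrow> S i j \<le> S i (j+1)"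
  using inv[unfolded sliding_inv_def, THEN conjunct2, THEN conjunct2, THEN conjunct2, THEN conjunct1]
  by simp

lemma S_nonzero: "i < p \<Longrightarrow> t \<le> j \<Longrightarrow> j < d \<Longrightarrow> j < j0 + t \<or> i < p - 1 \<Longrightarrow> S i j \<noteq> 0"
  using S_zero_iff[of i j] by auto

lemma S_col_less_rows:
  assumes "t \<le> j" "j < d" "i < i'" "i' < p" "j < j0 + t \<or> i' < p - 1"
  shows "S i j < S i' j"
proof (rule consecutive_less_imp_less[of "i' + 1" "\<lambda>r. S r j"])
  show "\<forall>r. r + 1 < i' + 1 \<longrightarrow> S r j < S (r+1) j"
  proof (intro allI impI)
    fix r assume r: "r + 1 < i' + 1"
    then have "S (r+1) j \<noteq> 0"
      using assms by (intro S_nonzero) auto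
    with r show "S r j < S (r+1) j"
      using assms by (intro S_col_less) auto
  qed
qed (use assms in simp_all)

lemma row_in_start: "row_in (j0+t) = p - 1"
  by (simp add: row_in_def)

lemma S_col_nonzero:
  assumes "t \<le> j" "j \<le> j0 + t" "i < p" "j < j0 + t \<or> i \<noteq> row_in j"
  shows "S i j \<noteq> 0"
  using assms hole_col row_in_start by (intro S_nonzero) (auto simp: order_le_less)

lemma row_in_le: "row_in c \<le> p - 1"
  unfolding row_in_def by (rule entry_row_le)

lemma row_in_prev:
  assumes "t < c" "c \<le> j0 + t"
  shows "row_in (c-1) = row_out c"
proof -
  have "j0 + t - (c - 1) = Suc (j0 + t - c)" "j0 + t - (j0 + t - c) = c"
    using assms by simp_all
  then show ?thesis
    unfolding row_in_def row_out_def by simp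
qed

lemma row_out_le: "row_out c \<le> row_in c"
  unfolding row_out_def by (rule exit_row_le)

lemma climb_cond: "0 < c \<Longrightarrow> row_out c < i \<Longrightarrow> i \<le> row_in c \<Longrightarrow> S i (c-1) \<le> S (i-1) c"
  using le_exit_row[of i "row_in c" S c] unfolding row_out_def exits_left_def by fastforce

lemma exit_cond: "0 < c \<Longrightarrow> row_out c = 0 \<or> S (row_out c - 1) c < S (row_out c) (c-1)"
  using exits_left_exit_row[of S c "row_in c"] unfolding row_out_def exits_left_def by auto

lemma row_out_first: "row_out t = 0"
proof (cases "t = 0")
  case True
  then show ?thesis
    using exit_cond[of t] exits_left_exit_row[of S t "row_in t"]
    unfolding row_out_def exits_left_def by simp
next
  case False
  then obtain h where h_start: "h (j0 + t - 1) = p - 1" and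
    band: "\<forall>c i. t - 1 \<le> c \<longrightarrow> c \<le> j0 + t - 1 \<longrightarrow> c + 1 < d \<longrightarrow> 0 < i \<longrightarrow> i \<le> h c \<longrightarrow>
          (c = t - 1 \<or> h (c - 1) < i) \<longrightarrow> S i c \<le> S (i-1) (c+1)"
    using inv[unfolded sliding_inv_def, THEN conjunct2, THEN conjunct2, THEN conjunct2, THEN conjunct2]
    by blast
  have no_exit: "\<not> (0 < row_out c \<and> row_out c \<le> h (c-1) \<and> (c = t \<or> h (c-2) < row_out c))"
    if "t \<le> c" "c \<le> j0 + t" for c
  proof
    assume e: "0 < row_out c \<and> row_out c \<le> h (c-1) \<and> (c = t \<or> h (c-2) < row_out c)"
    have c: "t - 1 \<le> c - 1" "c - 1 \<le> j0 + t - 1" "c - 1 + 1 < d" "c - 1 + 1 = c"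
      "c - 1 - 1 = c - 2"
      using that False hole_col by auto
    with e have "c - 1 = t - 1 \<or> h (c - 1 - 1) < row_out c"
      by auto
    with band c e have "S (row_out c) (c-1) \<le> S (row_out c - 1) (c - 1 + 1)"
      by blast
    moreover have "S (row_out c - 1) c < S (row_out c) (c-1)"
      using exit_cond[of c] e that False by simp
    ultimately show False
      using c by simp
  qed
  have "row_in (j0 + t - k) \<le> h (j0 + t - k - 1)" if "k \<le> j0" for k
    using that
  proof (induction k)
    case 0
    then show ?case
      using h_start row_in_start by simp
  next
    case (Suc k)
    define c where "c = j0 + t - k"
    have c: "t < c" "c \<le> j0 + t" "j0 + t - Suc k = c - 1" "j0 + t - Suc k - 1 = c - 2"
      using Suc.prems False by (auto simp: c_def)
    have "row_out c \<le> h (c - 1)"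
      using Suc row_out_le[of c] by (simp add: c_def)
    then have "row_out c \<le> h (c - 2)"
      using no_exit[of c] c by (cases "row_out c = 0") auto
    then show ?case
      using row_in_prev[of c] c by simp
  qed
  from this[of j0] have "row_out t \<le> h (t - 1)"
    using row_out_le[of t] by simp
  then show ?thesis
    using no_exit[of t] hole_col by simp
qed

lemma slid_outside: "j < t \<or> j0 + t < j \<Longrightarrow> slid i j = S i j"
  by (auto simp: slid_def)

lemma slid_above: "t \<le> j \<Longrightarrow> j \<le> j0+t \<Longrightarrow> i < row_out j \<Longrightarrow> slid i j = S i j"
  by (simp add: slid_def)

lemma slid_at_out:
  "t \<le> j \<Longrightarrow> j \<le> j0+t \<Longrightarrow> slid (row_out j) j = (if j = t then 0 else S (row_out j) (j-1))"
  by (simp add: slid_def)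

lemma slid_between:
  "t \<le> j \<Longrightarrow> j \<le> j0+t \<Longrightarrow> row_out j < i \<Longrightarrow> i \<le> row_in j \<Longrightarrow> slid i j = S (i-1) j"
  by (simp add: slid_def)

lemma slid_below: "t \<le> j \<Longrightarrow> j \<le> j0+t \<Longrightarrow> row_in j < i \<Longrightarrow> slid i j = S i j"
  using row_out_le[of j] by (simp add: slid_def)

lemma sliding_start: "sliding (j0+t) = S"
proof (intro ext)
  fix i j
  show "sliding (j0+t) i j = S i j"
  proof (cases "j0 + t < j")
    case True
    then show ?thesis
      by (simp add: sliding_def slid_outside)
  next
    case False
    then show ?thesis
      using S_zero_iff[of "p-1" "j0+t"] p_pos hole_col by (auto simp: sliding_def row_in_start)
  qed
qed

lemma slide_sliding_climb:
  assumes "t \<le> c" "c \<le> j0 + t"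
  shows "slide (sliding c) (row_in c) c
       = slide (shift_down (sliding c) c (row_out c) (row_in c)) (row_out c) c"
proof (rule slide_climb)
  show "row_out c \<le> row_in c" "sliding c (row_in c) c = 0"
    by (simp_all add: row_out_le sliding_def)
  show "\<forall>r. row_out c < r \<longrightarrow> r \<le> row_in c \<longrightarrow>
      0 < sliding c (r-1) c \<and> (c = 0 \<or> sliding c r (c-1) \<le> sliding c (r-1) c)"
  proof (intro allI impI)
    fix r assume r: "row_out c < r" "r \<le> row_in c"
    then have "sliding c (r-1) c = S (r-1) c"
      by (auto simp: sliding_def)
    moreover have "S (r-1) c \<noteq> 0"
      using r row_in_le[of c] assms hole_col by (intro S_nonzero) auto
    moreover have "c \<noteq> 0 \<Longrightarrow> sliding c r (c-1) = S r (c-1)"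
      by (auto simp: sliding_def)
    moreover have "c \<noteq> 0 \<Longrightarrow> S r (c-1) \<le> S (r-1) c"
      using climb_cond[of c r] r by simp
    ultimately show "0 < sliding c (r-1) c \<and> (c = 0 \<or> sliding c r (c-1) \<le> sliding c (r-1) c)"
      by (cases "c = 0") auto
  qed
qed

lemma slide_sliding_first: "slide (sliding t) (row_in t) t = slid"
proof -
  let ?T = "shift_down (sliding t) t 0 (row_in t)"
  have "slide (sliding t) (row_in t) t = slide ?T 0 t"
    using slide_sliding_climb[of t] row_out_first by simp
  moreover have "\<not> up_move ?T 0 t"
    by (simp add: up_move_def)
  moreover have "\<not> left_move ?T 0 t"
  proof
    assume "left_move ?T 0 t"
    then have "0 < t" "0 < ?T 0 (t-1)"
      by (auto simp: left_move_def)
    moreover have "?T 0 (t-1) = S 0 (t-1)"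
      using \<open>0 < t\<close> by (auto simp: shift_down_def sliding_def)
    moreover have "t - 1 < d"
      using hole_col by simp
    ultimately show False
      using S_zero_iff[of 0 "t-1"] p_pos by simp
  qed
  moreover have "?T = slid"
  proof (intro ext)
    fix a b
    consider "b \<noteq> t" | "b = t" "a = 0" | "b = t" "0 < a" "a \<le> row_in t" | "b = t" "row_in t < a"
      by linarith
    then show "?T a b = slid a b"
    proof cases
      case 1
      then show ?thesis
        by (cases "b < t") (auto simp: shift_down_def sliding_def slid_outside)
    next
      case 2
      then show ?thesis
        using slid_at_out[of t] row_out_first hole_col by (simp add: shift_down_def)
    next
      case 3
      then show ?thesis
        using slid_between[of t a] row_out_first hole_col by (auto simp: shift_down_def sliding_def)
    next
      case 4
      then show ?thesis
        using slid_below[of t a] hole_col by (auto simp: shift_down_def sliding_def)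
    qed
  qed
  ultimately show ?thesis
    using slide_stop by simp
qed

lemma swap_exit_eq_sliding:
  assumes c: "t < c" "c \<le> j0 + t"
  shows "swap_cells (shift_down (sliding c) c (row_out c) (row_in c)) (row_out c) c (row_out c) (c-1)
       = sliding (c-1)"
    (is "swap_cells ?T ?e c ?e (c-1) = _")
proof (intro ext)
  fix a b
  have e_le: "?e \<le> row_in c"
    by (rule row_out_le)
  consider "b \<noteq> c" "b \<noteq> c - 1" | "b = c - 1" | "b = c" "a < ?e" | "b = c" "a = ?e"
    | "b = c" "?e < a" "a \<le> row_in c" | "b = c" "row_in c < a"
    using c by linarith
  then show "swap_cells ?T ?e c ?e (c-1) a b = sliding (c-1) a b"
  proof cases
    case 1
    then show ?thesis
      using c by (auto simp: swap_cells_def shift_down_def sliding_def)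
  next
    case 2
    then show ?thesis
      using c e_le row_in_prev[OF c] by (auto simp: swap_cells_def shift_down_def sliding_def)
  next
    case 3
    then show ?thesis
      using c e_le slid_above[of c a] by (auto simp: swap_cells_def shift_down_def sliding_def)
  next
    case 4
    then show ?thesis
      using c slid_at_out[of c] by (auto simp: swap_cells_def shift_down_def sliding_def)
  next
    case 5
    then show ?thesis
      using c slid_between[of c a] by (auto simp: swap_cells_def shift_down_def sliding_def)
  next
    case 6
    then show ?thesis
      using c slid_below[of c a] e_le by (auto simp: swap_cells_def shift_down_def sliding_def)
  qed
qed

lemma slide_sliding_prev:
  assumes c: "t < c" "c \<le> j0 + t"
  shows "slide (sliding c) (row_in c) c = slide (sliding (c-1)) (row_in (c-1)) (c-1)"
proof -
  let ?e = "row_out c"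
  let ?T = "shift_down (sliding c) c ?e (row_in c)"
  have e_le: "?e \<le> row_in c" "?e < p"
    using row_out_le[of c] row_in_le[of c] p_pos by auto
  have T_up: "?T (?e - 1) c = S (?e - 1) c" if "0 < ?e"
    using that e_le by (auto simp: shift_down_def sliding_def)
  have T_left: "?T ?e (c-1) = S ?e (c-1)"
    using c by (auto simp: shift_down_def sliding_def)
  have "S ?e (c-1) \<noteq> 0"
    using e_le c hole_col by (intro S_nonzero) auto
  moreover have "?e = 0 \<or> S (?e - 1) c < S ?e (c-1)"
    using exit_cond c by simp
  ultimately have "\<not> up_move ?T ?e c" "left_move ?T ?e c"
    using T_up T_left c by (cases "?e = 0", auto simp: up_move_def left_move_def)+
  then show ?thesis
    using slide_sliding_climb[of c] slide_left swap_exit_eq_sliding[OF c] c row_in_prev[OF c]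
    by simp
qed

lemma slide_eq_slid: "slide S (p-1) (j0+t) = slid"
proof -
  have "slide (sliding (t+k)) (row_in (t+k)) (t+k) = slid" if "k \<le> j0" for k
    using that
  proof (induction k)
    case 0
    then show ?case
      using slide_sliding_first by simp
  next
    case (Suc k)
    then show ?case
      using slide_sliding_prev[of "t + Suc k"] by simp
  qed
  from this[of j0] show ?thesis
    using sliding_start row_in_start by (simp add: add.commute)
qed

lemma col_set_slid_at:
  assumes "t \<le> c" "c \<le> j0 + t"
  shows "col_set p slid c
       = insert (if c = t then 0 else S (row_out c) (c-1)) ((\<lambda>i. S i c) ` ({..<p} - {row_in c}))"
proof -
  have "(\<lambda>i. slid i c) = (\<lambda>i. if i < row_out c then S i c
          else if i = row_out c then (if c = t then 0 else S (row_out c) (c-1))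
          else if i \<le> row_in c then S (i-1) c else S i c)"
    using assms by (intro ext) (simp add: slid_def)
  moreover have "row_in c < p"
    using row_in_le[of c] p_pos by simp
  ultimately show ?thesis
    unfolding col_set_eq_image by (simp only:) (rule image_climbed_column[OF row_out_le])
qed

lemma col_set_sliding_at: "col_set p (sliding c) c = insert 0 ((\<lambda>i. S i c) ` ({..<p} - {row_in c}))"
proof -
  have "(\<lambda>i. sliding c i c) = (\<lambda>i. if i < row_in c then S i c else if i = row_in c then 0
          else if i \<le> row_in c then S (i-1) c else S i c)"
    by (intro ext) (auto simp: sliding_def)
  moreover have "row_in c < p"
    using row_in_le[of c] p_pos by simp
  ultimately show ?thesis
    unfolding col_set_eq_image by (simp only:) (rule image_climbed_column[OF order_refl])
qed

lemma col_set_sliding_right: "c < j \<Longrightarrow> col_set p (sliding c) j = col_set p slid j"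
  by (simp add: col_set_eq_image sliding_def)

lemma col_set_sliding_left: "j < c \<Longrightarrow> col_set p (sliding c) j = col_set p S j"
  by (simp add: col_set_eq_image sliding_def)

lemma exchange_sliding:
  assumes c: "t < c" "c \<le> j0 + t"
  defines "A \<equiv> col_set p (sliding c)"
  shows "exchange_applies (A (c-1)) (A c)"
    and "exchange_value (A (c-1)) (A c) = S (row_out c) (c-1)"
proof -
  let ?e = "row_out c" and ?q = "row_in c"
  let ?l = "\<lambda>i. S i (c-1)" and ?u = "\<lambda>i. S i c"
  let ?L = "?l ` {..<p}" and ?U = "?u ` ({..<p} - {?q})"
  have q: "?q < p" "c = j0 + t \<Longrightarrow> ?q = p - 1"
    using row_in_le[of c] row_in_start p_pos by auto
  have l_less: "\<forall>i j. i < j \<longrightarrow> j < p \<longrightarrow> ?l i < ?l j"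
    using c hole_col by (auto intro: S_col_less_rows)
  have u_less: "\<forall>i j. i < j \<longrightarrow> j < p \<longrightarrow> i \<noteq> ?q \<longrightarrow> j \<noteq> ?q \<longrightarrow> ?u i < ?u j"
  proof (intro allI impI)
    fix i j assume ij: "i < j" "j < p" "i \<noteq> ?q" "j \<noteq> ?q"
    then have "c < j0 + t \<or> j < p - 1"
      using c q by (cases "c = j0 + t") auto
    with ij show "?u i < ?u j"
      using c hole_col by (intro S_col_less_rows) auto
  qed
  have climb: "\<forall>i. ?e < i \<longrightarrow> i \<le> ?q \<longrightarrow> ?l i \<le> ?u (i-1)"
    using climb_cond c by auto
  have below: "\<forall>i. ?q < i \<longrightarrow> i < p \<longrightarrow> ?l i \<le> ?u i"
    using S_row_le[of _ "c-1"] S_nonzero[of _ c] c q hole_col by fastforce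
  have exit: "?e = 0 \<or> ?u (?e - 1) < ?l ?e"
    using exit_cond c by simp
  have "S i (c-1) \<noteq> 0" if "i < p" for i
    using that c by (intro S_col_nonzero) auto
  moreover have "S i c \<noteq> 0" if "i < p" "i \<noteq> ?q" for i
    using that c by (intro S_col_nonzero) auto
  ultimately have "0 \<notin> ?L" "0 \<notin> ?U"
    by force+
  moreover have "A (c-1) = ?L" "A c = insert 0 ?U"
    using col_set_sliding_left[of "c-1" c] col_set_sliding_at[of c] c
    by (simp_all add: A_def col_set_eq_image)
  ultimately have A: "A (c-1) - {0} = ?L" "A c - {0} = ?U" "0 \<in> A c" "0 \<notin> A (c-1)"
    by auto
  have at_exit: "0 < bracket_excess ?L ?U (S ?e (c-1))"
    by (rule bracket_excess_at_exit[OF row_out_le q(1) l_less u_less exit])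
  then show "exchange_applies (A (c-1)) (A c)"
    unfolding exchange_applies_def A(1,2) using A(3,4) by blast
  have "bracket_excess ?L ?U y \<le> 0" if "S ?e (c-1) < y" for y
    by (rule bracket_excess_above_exit[OF row_out_le q(1) that l_less u_less climb below])
  with at_exit show "exchange_value (A (c-1)) (A c) = S ?e (c-1)"
    unfolding exchange_value_def A by (intro Greatest_equality) (auto simp: not_less[symmetric])
qed

lemma col_set_sliding_prev:
  assumes c: "t < c" "c \<le> j0 + t"
  shows "col_set p (sliding (c-1)) = exchange c (col_set p (sliding c))"
proof
  fix j
  let ?A = "col_set p (sliding c)" and ?e = "row_out c"
  have exchange: "exchange c ?A
      = ?A(c-1 := insert 0 (?A (c-1) - {S ?e (c-1)}), c := insert (S ?e (c-1)) (?A c - {0}))"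
    using exchange_sliding[OF c] by (simp add: exchange_def)
  consider "j = c - 1" | "j = c" | "j < c - 1" | "c < j"
    by linarith
  then show "col_set p (sliding (c-1)) j = exchange c ?A j"
  proof cases
    case 1
    have "inj_on (\<lambda>i. S i (c-1)) {..<p}"
      using c hole_col by (intro inj_on_if_less_imp_less) (auto intro: S_col_less_rows)
    then have "(\<lambda>i. S i (c-1)) ` ({..<p} - {?e}) = (\<lambda>i. S i (c-1)) ` {..<p} - {S ?e (c-1)}"
      using row_out_le[of c] row_in_le[of c] p_pos by (subst inj_on_image_set_diff) auto
    moreover have "c - 1 \<noteq> c"
      using c by simp
    ultimately show ?thesis
      using 1 c col_set_sliding_at[of "c-1"] col_set_sliding_left[of "c-1" c] row_in_prev[OF c]
      by (simp add: exchange col_set_eq_image)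
  next
    case 2
    have "0 \<notin> (\<lambda>i. S i c) ` ({..<p} - {row_in c})"
      using c S_col_nonzero[of c] by force
    then show ?thesis
      using 2 c col_set_sliding_right[of "c-1" c] col_set_slid_at[of c] col_set_sliding_at[of c]
      by (simp add: exchange)
  next
    case 3
    then have "j \<noteq> c - 1" "j \<noteq> c"
      by auto
    with 3 show ?thesis
      using col_set_sliding_left[of j "c-1"] col_set_sliding_left[of j c] by (simp add: exchange)
  next
    case 4
    then have "j \<noteq> c - 1" "j \<noteq> c"
      by auto
    with 4 show ?thesis
      using col_set_sliding_right[of "c-1" j] col_set_sliding_right[of c j] by (simp add: exchange)
  qed
qed

lemma col_set_sliding_exchanges:
  "k \<le> j0 \<Longrightarrow> col_set p (sliding (j0+t-k)) = exchanges (map (\<lambda>u. j0+t-u) [0..<k]) (col_set p S)"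
proof (induction k)
  case 0
  then show ?case
    using sliding_start by simp
next
  case (Suc k)
  then have "t < j0 + t - k" "j0 + t - Suc k = j0 + t - k - 1"
    by auto
  with Suc show ?case
    using col_set_sliding_prev[of "j0 + t - k"] by simp
qed

lemma col_set_slid: "col_set p slid = exchanges (map (\<lambda>u. j0+t-u) [0..<j0]) (col_set p S)"
proof -
  have "col_set p slid j = col_set p (sliding t) j" for j
  proof -
    consider "t < j" | "j = t" | "j < t"
      by linarith
    then show ?thesis
    proof cases
      case 3
      then show ?thesis
        using col_set_sliding_left[of j t] by (simp add: col_set_eq_image slid_outside)
    qed (use col_set_sliding_right col_set_slid_at[of t] col_set_sliding_at[of t] in simp_all)
  qed
  then show ?thesis
    using col_set_sliding_exchanges[of j0] by auto
qed

lemma slid_zero_iff: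
  assumes i: "i < p" and j: "j < d"
  shows "slid i j = 0 \<longleftrightarrow> (i = 0 \<and> j < t + 1) \<or> (i = p - 1 \<and> j0 + (t + 1) \<le> j)"
proof (cases "t \<le> j \<and> j \<le> j0 + t")
  case False
  then show ?thesis
    using S_zero_iff[OF i j] slid_outside[of j i] by auto
next
  case True
  then have jr: "t \<le> j" "j \<le> j0 + t"
    by auto
  have er: "row_out j \<le> row_in j"
    by (rule row_out_le)
  consider "i < row_out j" | "i = row_out j" | "row_out j < i" "i \<le> row_in j" | "row_in j < i"
    by linarith
  then show ?thesis
  proof cases
    case 1
    then have "i \<noteq> 0 \<or> j \<noteq> t"
      using row_out_first by auto
    then have "\<not> ((i = 0 \<and> j < t + 1) \<or> (i = p - 1 \<and> j0 + (t + 1) \<le> j))"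
      using jr by auto
    moreover have "S i j \<noteq> 0"
      using S_col_nonzero[OF jr i] 1 er by simp
    ultimately show ?thesis
      using slid_above[OF jr 1] by simp
  next
    case 2
    moreover have "S i (j-1) \<noteq> 0" if "j \<noteq> t"
      using that i jr by (intro S_col_nonzero) auto
    ultimately show ?thesis
      using slid_at_out[OF jr] row_out_first jr by auto
  next
    case 3
    then have "S (i-1) j \<noteq> 0"
      using jr row_in_le[of j] by (intro S_col_nonzero) auto
    then show ?thesis
      using slid_between[OF jr] 3 jr by auto
  next
    case 4
    then have "S i j \<noteq> 0"
      using S_col_nonzero[OF jr i] by simp
    moreover have "j < j0 + t"
      using 4 jr i row_in_start by (cases "j = j0 + t") auto
    ultimately show ?thesis
      using slid_below[OF jr 4] 4 jr by auto
  qed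
qed

lemma slid_less_n:
  assumes i: "i < p" and j: "j < d"
  shows "slid i j < n"
proof (cases "t \<le> j \<and> j \<le> j0 + t")
  case False
  then show ?thesis
    using slid_outside[of j i] S_less_n[OF i j] by auto
next
  case True
  then have jr: "t \<le> j" "j \<le> j0 + t"
    by auto
  have "0 < n"
    using S_less_n[of 0 0] p_pos hole_col by simp
  consider "i < row_out j" | "i = row_out j" | "row_out j < i" "i \<le> row_in j" | "row_in j < i"
    by linarith
  then show ?thesis
  proof cases
    case 2
    then show ?thesis
      using slid_at_out[OF jr] S_less_n[of i "j-1"] i j \<open>0 < n\<close> by auto
  next
    case 3
    then show ?thesis
      using slid_between[OF jr] S_less_n[of "i-1" j] i j by auto
  qed (use slid_above[OF jr] slid_below[OF jr] S_less_n[OF i j] in simp_all)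
qed

lemma slid_le:
  assumes i: "i < p - 1" and jr: "t \<le> j" "j \<le> j0 + t"
  shows "slid i j \<le> S i j"
proof -
  have j: "j < d"
    using jr hole_col by simp
  then have "S i j \<noteq> 0"
    using jr i by (intro S_nonzero) auto
  consider "i < row_out j" | "i = row_out j" | "row_out j < i" "i \<le> row_in j" | "row_in j < i"
    by linarith
  then show ?thesis
  proof cases
    case 2
    then show ?thesis
      using slid_at_out[OF jr] S_row_le[of i "j-1"] i j jr \<open>S i j \<noteq> 0\<close> by (cases "j = t") auto
  next
    case 3
    then show ?thesis
      using slid_between[OF jr] S_col_less[of "i-1" j] i j \<open>S i j \<noteq> 0\<close> by fastforce
  qed (use slid_above[OF jr] slid_below[OF jr] in simp_all)
qed

lemma slid_col_less_at_exit:
  assumes jr: "t \<le> j" "j \<le> j0 + t" and i: "i = row_out j" "i + 1 < p"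
    and nz: "slid (i+1) j \<noteq> 0"
  shows "slid i j < slid (i+1) j"
proof (cases "j = t")
  case True
  then show ?thesis
    using slid_at_out[OF jr] i nz by simp
next
  case False
  then have j1: "t \<le> j - 1" "j - 1 < j0 + t" "0 < j"
    using jr by auto
  show ?thesis
  proof (cases "i + 1 \<le> row_in j")
    case True
    have "S i (j-1) < S (i+1) (j-1)"
      using j1 i hole_col by (intro S_col_less_rows) auto
    also have "\<dots> \<le> S i j"
      using climb_cond[of j "i+1"] True i j1 by simp
    finally show ?thesis
      using slid_at_out[OF jr] slid_between[OF jr, of "i+1"] i True False by simp
  next
    case False
    then have "j < j0 + t"
      using i jr row_out_le[of j] row_in_start by (cases "j = j0 + t") auto
    then have "S i (j-1) \<le> S i j"
      using S_row_le[of i "j-1"] S_nonzero[of i j] i j1 jr hole_col by simp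
    also have "\<dots> < S (i+1) j"
      using S_col_less[of i j] slid_below[OF jr, of "i+1"] nz i jr hole_col False by simp
    finally show ?thesis
      using slid_at_out[OF jr] slid_below[OF jr, of "i+1"] i False \<open>j \<noteq> t\<close> by simp
  qed
qed

lemma slid_col_less:
  assumes i: "i + 1 < p" and j: "j < d" and nz: "slid (i+1) j \<noteq> 0"
  shows "slid i j < slid (i+1) j"
proof (cases "t \<le> j \<and> j \<le> j0 + t")
  case False
  then show ?thesis
    using slid_outside[of j] S_col_less[OF i j] nz by auto
next
  case True
  then have jr: "t \<le> j" "j \<le> j0 + t"
    by auto
  let ?e = "row_out j" and ?q = "row_in j"
  have q: "?e \<le> ?q" "?q \<le> p - 1" "j = j0 + t \<Longrightarrow> ?q = p - 1"
    using row_out_le row_in_le row_in_start by simp_all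
  consider "i + 1 < ?e" | "i + 1 = ?e" | "i = ?e" | "?e < i" "i + 1 \<le> ?q" | "?e < i" "i = ?q"
    | "?q < i"
    by linarith
  then show ?thesis
  proof cases
    case 1
    then show ?thesis
      using slid_above[OF jr, of i] slid_above[OF jr, of "i+1"] S_col_less[OF i j] nz by simp
  next
    case 2
    then have jt: "j \<noteq> t" "?e - 1 = i"
      using row_out_first by auto
    then have "S i j < S ?e (j-1)"
      using exit_cond[of j] jr 2 by simp
    then show ?thesis
      using slid_above[OF jr, of i] slid_at_out[OF jr] 2 jt by simp
  next
    case 3
    then show ?thesis
      using slid_col_less_at_exit[OF jr _ i nz] by simp
  next
    case 4
    then have "S (i-1) j < S i j"
      using jr i q hole_col by (intro S_col_less_rows) auto
    then show ?thesis
      using slid_between[OF jr, of i] slid_between[OF jr, of "i+1"] 4 by simp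
  next
    case 5
    then have "j < j0 + t"
      using i jr row_in_start by (cases "j = j0 + t") auto
    then have "S (i-1) j < S i j"
      using 5 jr i hole_col by (intro S_col_less_rows) auto
    moreover have "S i j < S (i+1) j"
      using 5 jr i j nz slid_below[OF jr, of "i+1"] by (intro S_col_less) auto
    ultimately show ?thesis
      using slid_between[OF jr, of i] slid_below[OF jr, of "i+1"] 5 by simp
  next
    case 6
    then show ?thesis
      using slid_below[OF jr, of i] slid_below[OF jr, of "i+1"] S_col_less[OF i j] nz by simp
  qed
qed

lemma slid_row_le_at_exit:
  assumes jr: "t \<le> j" "j + 1 \<le> j0 + t" and i: "i = row_out j"
    and nz: "slid i (j+1) \<noteq> 0"
  shows "slid i j \<le> slid i (j+1)"
proof -
  have jr': "j \<le> j0 + t" "t \<le> j + 1" and in_next: "row_in j = row_out (j+1)"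
    using jr row_in_prev[of "j+1"] by auto
  have "i < p"
    using i row_out_le[of j] row_in_le[of j] p_pos by simp
  then have "S i j \<noteq> 0"
    using jr by (intro S_col_nonzero) auto
  then have "slid i j \<le> S i j"
    using slid_at_out[OF jr(1) jr'(1)] S_row_le[of i "j-1"] i jr hole_col \<open>i < p\<close>
    by (cases "j = t") auto
  moreover have "slid i (j+1) = S i (j+1) \<or> slid i (j+1) = S i j"
  proof (cases "i < row_out (j+1)")
    case True
    then show ?thesis
      using slid_above[OF jr'(2) jr(2), of i] by simp
  next
    case False
    then have "i = row_out (j+1)" "j + 1 \<noteq> t"
      using i in_next row_out_le[of j] jr by auto
    then show ?thesis
      using slid_at_out[OF jr'(2) jr(2)] by simp
  qed
  ultimately show ?thesis
    using S_row_le[of i j] nz \<open>i < p\<close> jr hole_col by fastforce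
qed

lemma slid_row_le_path:
  assumes jr: "t \<le> j" "j + 1 \<le> j0 + t" and i: "i < p" and nz: "slid i (j+1) \<noteq> 0"
  shows "slid i j \<le> slid i (j+1)"
proof -
  have jr': "j \<le> j0 + t" "t \<le> j + 1" "j + 1 < d"
    using jr hole_col by auto
  let ?e = "row_out j" and ?q = "row_in j"
  have q: "?q = row_out (j+1)" "?e \<le> ?q" "?q \<le> row_in (j+1)"
    using row_in_prev[of "j+1"] row_out_le[of j] row_out_le[of "j+1"] jr by auto
  have zj: "S i j \<noteq> 0"
    using i jr by (intro S_col_nonzero) auto
  consider "i < ?e" | "i = ?e" | "?e < i" "i < ?q" | "?e < i" "i = ?q" | "?q < i" "i \<le> row_in (j+1)"
    | "row_in (j+1) < i"
    by linarith
  then show ?thesis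
  proof cases
    case 1
    then show ?thesis
      using slid_above[OF jr(1) jr'(1), of i] slid_above[OF jr'(2) jr(2), of i] q
        S_row_le[OF i jr'(3)] nz by simp
  next
    case 2
    then show ?thesis
      using slid_row_le_at_exit[OF jr _ nz] by simp
  next
    case 3
    then have "S (i-1) j < S i j"
      using S_col_less[of "i-1" j] zj i jr' by simp
    then show ?thesis
      using slid_between[OF jr(1) jr'(1), of i] slid_above[OF jr'(2) jr(2), of i] 3 q
        S_row_le[OF i jr'(3)] nz by simp
  next
    case 4
    then have "S (i-1) j < S i j"
      using S_col_less[of "i-1" j] zj i jr' by simp
    then show ?thesis
      using slid_between[OF jr(1) jr'(1), of i] slid_at_out[OF jr'(2) jr(2)] 4 q jr by simp
  next
    case 5
    then have "S i j \<le> S (i-1) (j+1)"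
      using climb_cond[of "j+1" i] q by simp
    then show ?thesis
      using slid_below[OF jr(1) jr'(1), of i] slid_between[OF jr'(2) jr(2), of i] 5 q by simp
  next
    case 6
    then show ?thesis
      using slid_below[OF jr(1) jr'(1), of i] slid_below[OF jr'(2) jr(2), of i] q
        S_row_le[OF i jr'(3)] nz by simp
  qed
qed

lemma slid_row_le:
  assumes i: "i < p" and j: "j + 1 < d" and nz: "slid i (j+1) \<noteq> 0"
  shows "slid i j \<le> slid i (j+1)"
proof -
  consider "j + 1 < t" | "j + 1 = t" | "t \<le> j" "j + 1 \<le> j0 + t" | "j = j0 + t" | "j0 + t < j"
    by linarith
  then show ?thesis
  proof cases
    case 2
    then have jr: "t \<le> j + 1" "j + 1 \<le> j0 + t" "0 < t" "j = t - 1" "slid i j = S i j"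
      using slid_outside[of j i] by auto
    consider "i = 0" | "0 < i" "i \<le> row_in t" | "row_in t < i"
      by linarith
    then show ?thesis
    proof cases
      case 1
      then show ?thesis
        using slid_at_out[OF jr(1,2)] row_out_first 2 nz by simp
    next
      case 2
      then have "S i (t-1) \<le> S (i-1) t"
        using climb_cond[of t i] row_out_first jr by simp
      then show ?thesis
        using slid_between[OF jr(1,2), of i] 2 row_out_first jr by simp
    next
      case 3
      then show ?thesis
        using slid_below[OF jr(1,2), of i] jr S_row_le[OF i j] nz by simp
    qed
  next
    case 3
    then show ?thesis
      using slid_row_le_path i nz by blast
  next
    case 4
    then have r: "slid i (j+1) = S i (j+1)"
      using slid_outside[of "j+1" i] by simp
    then have "i < p - 1"
      using S_zero_iff[of i "j+1"] i j 4 nz by auto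
    then have "slid i j \<le> S i j"
      using slid_le 4 by simp
    then show ?thesis
      using r S_row_le[OF i j] nz by simp
  qed (use slid_outside[of j i] slid_outside[of "j+1" i] S_row_le[OF i j] nz in simp_all)
qed

lemma slid_band:
  assumes c: "t \<le> c" "c \<le> j0 + t" "c + 1 < d" and i: "0 < i" "i \<le> row_in c"
    and lo: "c = t \<or> row_in (c-1) < i"
  shows "slid i c \<le> slid (i-1) (c+1)"
proof -
  have "row_out c < i"
    using lo row_in_prev[of c] c row_out_first i by (cases "c = t") auto
  then have l: "slid i c = S (i-1) c"
    using slid_between[OF c(1,2)] i by simp
  have r: "slid (i-1) (c+1) = S (i-1) (c+1)"
  proof (cases "c + 1 \<le> j0 + t")
    case True
    then have "i - 1 < row_out (c+1)"
      using row_in_prev[of "c+1"] c i by simp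
    then show ?thesis
      using slid_above[of "c+1" "i-1"] True c by simp
  qed (simp add: slid_outside)
  have "i - 1 < p - 1"
    using i row_in_le[of c] by linarith
  then have "S (i-1) c \<le> S (i-1) (c+1)"
    using S_row_le[of "i-1" c] S_nonzero[of "i-1" "c+1"] c by simp
  then show ?thesis
    using l r by simp
qed

lemma sliding_inv_slid: "sliding_inv p n d j0 (t+1) slid"
  unfolding sliding_inv_def
proof (intro conjI)
  show "\<forall>i<p. \<forall>j<d. (slid i j = 0) = (i = 0 \<and> j < t + 1 \<or> i = p - 1 \<and> j0 + (t + 1) \<le> j)"
    by (intro allI impI) (rule slid_zero_iff)
  show "\<forall>i<p. \<forall>j<d. slid i j < n"
    by (intro allI impI) (rule slid_less_n)
  show "\<forall>i j. i + 1 < p \<longrightarrow> j < d \<longrightarrow> slid (i + 1) j \<noteq> 0 \<longrightarrow> slid i j < slid (i + 1) j"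
    by (intro allI impI) (rule slid_col_less)
  show "\<forall>i j. i < p \<longrightarrow> j + 1 < d \<longrightarrow> slid i (j + 1) \<noteq> 0 \<longrightarrow> slid i j \<le> slid i (j + 1)"
    by (intro allI impI) (rule slid_row_le)
  have "\<forall>c i. t + 1 - 1 \<le> c \<longrightarrow> c \<le> j0 + (t + 1) - 1 \<longrightarrow> c + 1 < d \<longrightarrow> 0 < i \<longrightarrow>
      i \<le> row_in c \<longrightarrow> (c = t + 1 - 1 \<or> row_in (c - 1) < i) \<longrightarrow> slid i c \<le> slid (i - 1) (c + 1)"
    by (intro allI impI, rule slid_band) auto
  then show "0 < t + 1 \<longrightarrow> (\<exists>h. h (j0 + (t + 1) - 1) = p - 1 \<and>
       (\<forall>c i. t + 1 - 1 \<le> c \<longrightarrow> c \<le> j0 + (t + 1) - 1 \<longrightarrow> c + 1 < d \<longrightarrow> 0 < i \<longrightarrow> i \<le> h c \<longrightarrow>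
          (c = t + 1 - 1 \<or> h (c - 1) < i) \<longrightarrow> slid i c \<le> slid (i - 1) (c + 1)))"
    using row_in_start by auto
qed

end

lemma slide_hole_step:
  assumes "sliding_inv p n d j0 t S" "0 < p" "j0 + t < d"
  shows "sliding_inv p n d j0 (t+1) (slide S (p-1) (j0+t))"
    and "col_set p (slide S (p-1) (j0+t)) = exchanges (map (\<lambda>u. j0+t-u) [0..<j0]) (col_set p S)"
proof -
  interpret hole_slide p n d j0 t S
    using assms by unfold_locales
  show "sliding_inv p n d j0 (t+1) (slide S (p-1) (j0+t))"
    using sliding_inv_slid slide_eq_slid by simp
  show "col_set p (slide S (p-1) (j0+t)) = exchanges (map (\<lambda>u. j0+t-u) [0..<j0]) (col_set p S)"
    using col_set_slid slide_eq_slid by simp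
qed

section \<open>Promotion as a word of exchanges\<close>

lemma sorted_list_of_set_image_strict_mono:
  fixes f :: "nat \<Rightarrow> nat"
  assumes "strict_mono_on X f" "finite X"
  shows "sorted_list_of_set (f ` X) = map f (sorted_list_of_set X)"
proof -
  have "sorted_wrt (<) (map f (sorted_list_of_set X))"
    using assms by (auto simp: sorted_wrt_map strict_mono_on_def
        intro: sorted_wrt_mono_rel[OF _ sorted_list_of_set.strict_sorted_key_list_of_set])
  moreover have "inj_on f X"
    using assms(1) by (rule strict_mono_on_imp_inj_on)
  ultimately show ?thesis
    using assms(2) by (subst sorted_list_of_set_unique [symmetric]) (auto simp: card_image)
qed

lemma sorted_col_of_strict_mono:
  fixes g :: "nat \<Rightarrow> nat"
  assumes "\<forall>i. i + 1 < p \<longrightarrow> g i < g (i+1)"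
  shows "sorted_list_of_set (g ` {..<p}) = map g [0..<p]" and "card (g ` {..<p}) = p"
proof -
  have "strict_mono_on {..<p} g"
    using consecutive_less_imp_less[OF assms] by (intro strict_mono_onI) simp
  then show "sorted_list_of_set (g ` {..<p}) = map g [0..<p]" "card (g ` {..<p}) = p"
    using sorted_list_of_set_image_strict_mono[of "{..<p}" g]
    by (simp_all add: lessThan_atLeast0 card_image strict_mono_on_imp_inj_on)
qed

fun prom_stage :: "nat \<Rightarrow> nat \<Rightarrow> (nat \<Rightarrow> nat \<Rightarrow> nat) \<Rightarrow> nat \<Rightarrow> (nat \<Rightarrow> nat \<Rightarrow> nat)" where
  "prom_stage p j0 T0 0 = T0"
| "prom_stage p j0 T0 (Suc t) = slide (prom_stage p j0 T0 t) (p-1) (j0+t)"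

definition prom_word :: "nat \<Rightarrow> nat \<Rightarrow> nat list" where
  "prom_word j0 r = concat (map (\<lambda>t. map (\<lambda>u. j0+t-u) [0..<j0]) [0..<r])"

lemma prom_stage_inv:
  assumes "sliding_inv p n d j0 0 T0" "0 < p" "j0 + t \<le> d"
  shows "sliding_inv p n d j0 t (prom_stage p j0 T0 t)"
    and "col_set p (prom_stage p j0 T0 t) = exchanges (prom_word j0 t) (col_set p T0)"
proof -
  have "sliding_inv p n d j0 t (prom_stage p j0 T0 t)
      \<and> col_set p (prom_stage p j0 T0 t) = exchanges (prom_word j0 t) (col_set p T0)"
    using assms(3)
  proof (induction t)
    case 0
    then show ?case
      using assms(1) by (simp add: prom_word_def)
  next
    case (Suc t)
    then have "sliding_inv p n d j0 t (prom_stage p j0 T0 t)"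
      "col_set p (prom_stage p j0 T0 t) = exchanges (prom_word j0 t) (col_set p T0)"
      by simp_all
    with slide_hole_step[OF _ assms(2)] Suc.prems show ?case
      by (simp add: prom_word_def)
  qed
  then show "sliding_inv p n d j0 t (prom_stage p j0 T0 t)"
    "col_set p (prom_stage p j0 T0 t) = exchanges (prom_word j0 t) (col_set p T0)"
    by simp_all
qed

lemma foldl_prom_stage:
  assumes "\<forall>j<d. T (p-1) j = n \<longleftrightarrow> j0 \<le> j" "j0 + t \<le> d"
  shows "foldl (\<lambda>S j. if T (p-1) j = n then slide S (p-1) j else S) T0 [0..<j0+t]
       = prom_stage p j0 T0 t"
  using assms(2)
proof (induction t)
  case 0
  have skip: "foldl (\<lambda>S j. if P j then f S j else S) S xs = S" if "\<forall>j\<in>set xs. \<not> P j"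
    for P f S and xs :: "nat list"
    using that by (induction xs arbitrary: S) auto
  show ?case
    by simp (rule skip, use assms(1) 0 in auto)
next
  case (Suc t)
  then show ?case
    using assms(1) by simp
qed

definition blank_max :: "nat \<Rightarrow> nat \<Rightarrow> nat \<Rightarrow> (nat \<Rightarrow> nat \<Rightarrow> nat) \<Rightarrow> (nat \<Rightarrow> nat \<Rightarrow> nat)" where
  "blank_max p n d T = (\<lambda>i j. if i < p \<and> j < d \<and> T i j = n then 0 else T i j)"

lemma semistandard_max_in_last_row:
  assumes "semistandard p n d T" "i < p" "j < d" "T i j = n"
  shows "i = p - 1"
proof (rule ccontr)
  assume "i \<noteq> p - 1"
  then have "T i j < T (i+1) j" "T (i+1) j \<le> n"
    using assms(1-3) unfolding semistandard_def by auto
  with assms(4) show False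
    by simp
qed

lemma sliding_inv_blank_max:
  assumes ss: "semistandard p n d T" and j0: "\<forall>j<d. T (p-1) j = n \<longleftrightarrow> j0 \<le> j"
  shows "sliding_inv p n d j0 0 (blank_max p n d T)"
proof -
  have range: "1 \<le> T i j \<and> T i j \<le> n" if "i < p" "j < d" for i j
    using ss that unfolding semistandard_def by auto
  have col: "T i j < T (i+1) j" if "i + 1 < p" "j < d" for i j
    using ss that unfolding semistandard_def by auto
  have row: "T i j \<le> T i (j+1)" if "i < p" "j + 1 < d" for i j
    using ss that unfolding semistandard_def by auto
  note last_row = semistandard_max_in_last_row[OF ss]
  show ?thesis
    unfolding sliding_inv_def
  proof (intro conjI allI impI)
    fix i j assume i: "i < p" and j: "j < d"
    show "(blank_max p n d T i j = 0) = (i = 0 \<and> j < 0 \<or> i = p - 1 \<and> j0 + 0 \<le> j)"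
      using range[OF i j] last_row[OF i j] j0 j i by (auto simp: blank_max_def)
    show "blank_max p n d T i j < n"
      using range[OF i j] i j by (auto simp: blank_max_def)
  next
    fix i j assume ij: "i + 1 < p" "j < d" "blank_max p n d T (i + 1) j \<noteq> 0"
    then show "blank_max p n d T i j < blank_max p n d T (i + 1) j"
      using col[of i j] last_row[of i j] by (auto simp: blank_max_def)
  next
    fix i j assume ij: "i < p" "j + 1 < d" "blank_max p n d T i (j + 1) \<noteq> 0"
    then show "blank_max p n d T i j \<le> blank_max p n d T i (j + 1)"
      using row[of i j] range[of i "j+1"] by (auto simp: blank_max_def)
  qed simp
qed

lemma prom_columns:
  assumes ss: "semistandard p n d T" and p: "0 < p"
    and j0: "\<forall>j<d. T (p-1) j = n \<longleftrightarrow> j0 \<le> j" "j0 \<le> d"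
  obtains F where "prom p n d T = (\<lambda>i j. if i < p \<and> j < d then F i j + 1 else 0)"
    and "\<And>i j. i < p \<Longrightarrow> j < d \<Longrightarrow> F i j = sorted_list_of_set (col_set p F j) ! i"
    and "col_set p F = exchanges (prom_word j0 (d - j0)) (col_set p (blank_max p n d T))"
    and "\<And>j. j < d \<Longrightarrow> card (col_set p F j) = p \<and> col_set p F j \<subseteq> {0..<n}"
proof
  let ?F = "prom_stage p j0 (blank_max p n d T) (d - j0)"
  note inv0 = sliding_inv_blank_max[OF ss j0(1)]
  have inv: "sliding_inv p n d j0 (d - j0) ?F"
    and cols: "col_set p ?F = exchanges (prom_word j0 (d - j0)) (col_set p (blank_max p n d T))"
    using prom_stage_inv[OF inv0 p] j0(2) by simp_all
  have "foldl (\<lambda>S j. if T (p-1) j = n then slide S (p-1) j else S) (blank_max p n d T) [0..<d] = ?F"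
    using foldl_prom_stage[of d T p n j0 "d - j0"] j0 by simp
  then show "prom p n d T = (\<lambda>i j. if i < p \<and> j < d then ?F i j + 1 else 0)"
    unfolding prom_def Let_def blank_max_def[symmetric] by (simp only:)
  show "col_set p ?F = exchanges (prom_word j0 (d - j0)) (col_set p (blank_max p n d T))"
    by (rule cols)
  have nonzero: "?F i j \<noteq> 0" if "0 < i" "i < p" "j < d" for i j
    using inv[unfolded sliding_inv_def, THEN conjunct1] that j0(2) by auto
  have below_n: "?F i j < n" if "i < p" "j < d" for i j
    using inv[unfolded sliding_inv_def, THEN conjunct2, THEN conjunct1] that by blast
  have strict: "\<forall>i. i + 1 < p \<longrightarrow> ?F i j < ?F (i+1) j" if "j < d" for j
    using inv[unfolded sliding_inv_def, THEN conjunct2, THEN conjunct2, THEN conjunct1]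
      nonzero[of _ j] that by simp
  note sorted_col = sorted_col_of_strict_mono[OF strict]
  show "?F i j = sorted_list_of_set (col_set p ?F j) ! i" if "i < p" "j < d" for i j
    using sorted_col(1)[OF that(2)] that unfolding col_set_eq_image by simp
  show "card (col_set p ?F j) = p \<and> col_set p ?F j \<subseteq> {0..<n}" if "j < d" for j
    using sorted_col(2)[OF that] below_n that unfolding col_set_eq_image by auto
qed

section \<open>The complementation map\<close>

lemma semistandard_col_set:
  assumes "semistandard p n d T" "j < d"
  shows "col_set p T j \<subseteq> {1..n}" and "\<forall>i. i + 1 < p \<longrightarrow> T i j < T (i+1) j"
    and "card (col_set p T j) = p"
proof -
  show "col_set p T j \<subseteq> {1..n}"
    using assms unfolding semistandard_def col_set_def by auto
  show strict: "\<forall>i. i + 1 < p \<longrightarrow> T i j < T (i+1) j"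
    using assms unfolding semistandard_def by auto
  show "card (col_set p T j) = p"
    unfolding col_set_eq_image using strict by (rule sorted_col_of_strict_mono(2))
qed

lemma semistandard_row_mono:
  assumes "semistandard p n d T" "i < p" "j \<le> j'" "j' < d"
  shows "T i j \<le> T i j'"
  using assms(3,4)
proof (induction j' rule: dec_induct)
  case (step j')
  then have "T i j' \<le> T i (Suc j')"
    using assms(1,2) unfolding semistandard_def by simp
  with step show ?case
    by simp
qed simp

lemma semistandard_max_cols:
  assumes ss: "semistandard p n d T" and p: "0 < p"
  obtains j0 where "j0 \<le> d" "\<forall>j<d. T (p-1) j = n \<longleftrightarrow> j0 \<le> j"
proof
  let ?j0 = "LEAST j. j = d \<or> (j < d \<and> T (p-1) j = n)"
  show "?j0 \<le> d"
    by (rule Least_le) simp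
  show "\<forall>j<d. T (p-1) j = n \<longleftrightarrow> ?j0 \<le> j"
  proof (intro allI impI iffI)
    fix j assume "j < d" "T (p-1) j = n"
    then show "?j0 \<le> j"
      by (intro Least_le) simp
  next
    fix j assume j: "j < d" "?j0 \<le> j"
    have "?j0 = d \<or> (?j0 < d \<and> T (p-1) ?j0 = n)"
      by (rule LeastI[of _ d]) simp
    then have "T (p-1) ?j0 = n"
      using j by auto
    moreover have "T (p-1) ?j0 \<le> T (p-1) j" "T (p-1) j \<le> n"
      using semistandard_row_mono[OF ss _ j(2,1)] ss j p unfolding semistandard_def by auto
    ultimately show "T (p-1) j = n"
      by simp
  qed
qed

lemma semistandard_max_in_col:
  assumes "semistandard p n d T" "0 < p" "j < d"
  shows "T (p-1) j = n \<longleftrightarrow> n \<in> col_set p T j"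
  using assms semistandard_max_in_last_row[OF assms(1) _ assms(3)]
  unfolding col_set_def by (auto intro: exI[of _ "p-1"])

lemma card_le_of_pointwise_le:
  fixes a b :: "nat \<Rightarrow> nat"
  assumes "\<forall>i<q. a i \<le> b i"
  shows "card {i \<in> {..<q}. b i \<le> x} \<le> card {i \<in> {..<q}. a i \<le> x}"
  by (rule card_mono) (use assms in \<open>auto intro: le_trans\<close>)

lemma pointwise_le_of_card_le:
  fixes u v :: "nat \<Rightarrow> nat"
  assumes u: "\<forall>i j. i < j \<longrightarrow> j < q \<longrightarrow> u i < u j" and v: "\<forall>i j. i < j \<longrightarrow> j < q \<longrightarrow> v i < v j"
    and count: "\<forall>x. card {i \<in> {..<q}. v i \<le> x} \<le> card {i \<in> {..<q}. u i \<le> x}"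
    and i: "i < q"
  shows "u i \<le> v i"
proof (rule ccontr)
  assume "\<not> u i \<le> v i"
  have "{i' \<in> {..<q}. u i' \<le> v i} \<subseteq> {..<i}"
  proof
    fix i' assume i': "i' \<in> {i' \<in> {..<q}. u i' \<le> v i}"
    show "i' \<in> {..<i}"
    proof (rule ccontr)
      assume "i' \<notin> {..<i}"
      then have "u i \<le> u i'"
        using u i' by (cases "i = i'") (auto intro: less_imp_le)
      with i' \<open>\<not> u i \<le> v i\<close> show False
        by simp
    qed
  qed
  then have "card {i' \<in> {..<q}. u i' \<le> v i} \<le> i"
    using card_mono[of "{..<i}"] by fastforce
  moreover have "{..i} \<subseteq> {i' \<in> {..<q}. v i' \<le> v i}"
    using v i by (auto simp: le_less)
  then have "Suc i \<le> card {i' \<in> {..<q}. v i' \<le> v i}"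
    using card_mono[of "{i' \<in> {..<q}. v i' \<le> v i}" "{..i}"] by simp
  ultimately show False
    using count[rule_format, of "v i"] by simp
qed

lemma card_filter_le_diff:
  fixes X :: "nat set"
  assumes "X \<subseteq> {1..n}"
  shows "card {y \<in> {1..n} - X. y \<le> x} = card {y \<in> {1..n}. y \<le> x} - card {y \<in> X. y \<le> x}"
proof -
  have "{y \<in> {1..n} - X. y \<le> x} = {y \<in> {1..n}. y \<le> x} - {y \<in> X. y \<le> x}"
    "{y \<in> X. y \<le> x} \<subseteq> {y \<in> {1..n}. y \<le> x}"
    using assms by auto
  moreover have "finite {y \<in> X. y \<le> x}"
    using assms by (auto intro: finite_subset)
  ultimately show ?thesis
    by (simp add: card_Diff_subset)
qed

lemma sorted_list_of_set_nth_less: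
  "finite Y \<Longrightarrow> i < j \<Longrightarrow> j < card Y \<Longrightarrow> sorted_list_of_set Y ! i < sorted_list_of_set Y ! j"
  using sorted_list_of_set.strict_sorted_key_list_of_set[of Y]
  by (simp add: sorted_wrt_iff_nth_less)

lemma image_nth_sorted_list_of_set:
  assumes "finite Y"
  shows "(\<lambda>i. sorted_list_of_set Y ! i) ` {..<card Y} = Y"
proof -
  have "set (sorted_list_of_set Y) = Y" "length (sorted_list_of_set Y) = card Y"
    using assms by simp_all
  then show ?thesis
    by (auto simp: set_conv_nth)
qed

lemma sorted_list_of_set_image_Suc:
  "finite X \<Longrightarrow> sorted_list_of_set (Suc ` X) = map Suc (sorted_list_of_set X)"
  by (rule sorted_list_of_set_image_strict_mono) (auto intro: strict_mono_onI)

lemma diff_image_Suc: "X \<subseteq> {0..<n} \<Longrightarrow> {1..n} - Suc ` X = Suc ` ({0..<n} - X)"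
proof (intro equalityI subsetI)
  fix y assume "y \<in> {1..n} - Suc ` X"
  then have "y = Suc (y - 1)" "y - 1 \<in> {0..<n} - X"
    by (auto simp: image_iff)
  then show "y \<in> Suc ` ({0..<n} - X)"
    by (metis imageI)
qed auto

context
  fixes k n d :: nat and m :: "nat \<Rightarrow> nat \<Rightarrow> nat"
  assumes k_pos: "1 \<le> k" and k_less: "k < n" and ss: "semistandard k n d m"
begin

definition dual_col :: "nat \<Rightarrow> nat set" where
  "dual_col j = {1..n} - col_set k m (d-1-j)"

lemma finite_dual_col: "finite (dual_col j)"
  by (simp add: dual_col_def)

lemma card_dual_col: "j < d \<Longrightarrow> card (dual_col j) = n - k"
  using semistandard_col_set[OF ss, of "d-1-j"] unfolding dual_col_def
  by (subst card_Diff_subset) (auto intro: finite_subset)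

lemma phi_eq_nth: "i < n - k \<Longrightarrow> j < d \<Longrightarrow> phi k n d m i j = sorted_list_of_set (dual_col j) ! i"
  by (simp add: phi_def dual_col_def)

lemma col_set_phi: "j < d \<Longrightarrow> col_set (n-k) (phi k n d m) j = dual_col j"
  using image_nth_sorted_list_of_set[OF finite_dual_col, of j] card_dual_col[of j]
  by (simp add: col_set_eq_image phi_eq_nth)

lemma card_dual_col_le:
  assumes j: "j + 1 < d"
  shows "card {y \<in> dual_col (j+1). y \<le> x} \<le> card {y \<in> dual_col j. y \<le> x}"
proof -
  let ?a = "\<lambda>i. m i (d-2-j)" and ?b = "\<lambda>i. m i (d-1-j)"
  have cols: "d - 1 - (j+1) = d - 2 - j" "d - 2 - j + 1 = d - 1 - j" "d - 1 - j < d"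
    using j by auto
  have "?a i \<le> ?b i" if "i < k" for i
  proof -
    have "m i (d-2-j) \<le> m i (d-2-j+1)"
      using ss[unfolded semistandard_def, THEN conjunct2, THEN conjunct2, rule_format, of i "d-2-j"]
        that cols by simp
    then show ?thesis
      using cols(2) by simp
  qed
  then have "card {i \<in> {..<k}. ?b i \<le> x} \<le> card {i \<in> {..<k}. ?a i \<le> x}"
    by (intro card_le_of_pointwise_le) simp
  moreover have "\<forall>i i'. i < i' \<longrightarrow> i' < k \<longrightarrow> ?a i < ?a i'"
    "\<forall>i i'. i < i' \<longrightarrow> i' < k \<longrightarrow> ?b i < ?b i'"
    using consecutive_less_imp_less[OF semistandard_col_set(2)[OF ss, of "d-2-j"]]
      consecutive_less_imp_less[OF semistandard_col_set(2)[OF ss, of "d-1-j"]] cols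
    by auto
  then have "inj_on ?a {..<k}" "inj_on ?b {..<k}"
    by (auto intro!: inj_on_if_less_imp_less)
  ultimately have "card {y \<in> col_set k m (d-1-j). y \<le> x} \<le> card {y \<in> col_set k m (d-2-j). y \<le> x}"
    by (simp add: col_set_eq_image card_filter_image)
  moreover have sub: "col_set k m (d-2-j) \<subseteq> {1..n}" "col_set k m (d-1-j) \<subseteq> {1..n}"
    using semistandard_col_set(1)[OF ss] cols by auto
  moreover from this have "card {y \<in> col_set k m (d-2-j). y \<le> x} \<le> card {y \<in> {1..n}. y \<le> x}"
    by (intro card_mono) auto
  moreover have "card {y \<in> dual_col (j+1). y \<le> x}
      = card {y \<in> {1..n}. y \<le> x} - card {y \<in> col_set k m (d-2-j). y \<le> x}"
    unfolding dual_col_def cols(1) using sub(1) by (rule card_filter_le_diff)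
  moreover have "card {y \<in> dual_col j. y \<le> x}
      = card {y \<in> {1..n}. y \<le> x} - card {y \<in> col_set k m (d-1-j). y \<le> x}"
    unfolding dual_col_def using sub(2) by (rule card_filter_le_diff)
  ultimately show ?thesis
    by linarith
qed

lemma phi_row_le:
  assumes i: "i < n - k" and j: "j + 1 < d"
  shows "phi k n d m i j \<le> phi k n d m i (j+1)"
proof -
  let ?u = "\<lambda>i. sorted_list_of_set (dual_col j) ! i"
  let ?v = "\<lambda>i. sorted_list_of_set (dual_col (j+1)) ! i"
  have card: "card (dual_col j) = n - k" "card (dual_col (j+1)) = n - k"
    using card_dual_col j by simp_all
  have u: "\<forall>i i'. i < i' \<longrightarrow> i' < n - k \<longrightarrow> ?u i < ?u i'"
    and v: "\<forall>i i'. i < i' \<longrightarrow> i' < n - k \<longrightarrow> ?v i < ?v i'"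
    using sorted_list_of_set_nth_less[OF finite_dual_col] card by auto
  then have inj: "inj_on ?u {..<n-k}" "inj_on ?v {..<n-k}"
    by (auto intro!: inj_on_if_less_imp_less)
  have img: "?u ` {..<n-k} = dual_col j" "?v ` {..<n-k} = dual_col (j+1)"
    using image_nth_sorted_list_of_set[OF finite_dual_col] card by metis+
  have "card {i \<in> {..<n-k}. ?v i \<le> x} \<le> card {i \<in> {..<n-k}. ?u i \<le> x}" for x
    using card_dual_col_le[OF j, of x] card_filter_image[OF inj(1), of "\<lambda>y. y \<le> x"]
      card_filter_image[OF inj(2), of "\<lambda>y. y \<le> x"] unfolding img by simp
  then have "?u i \<le> ?v i"
    by (intro pointwise_le_of_card_le[OF u v _ i]) simp
  then show ?thesis
    using phi_eq_nth i j by simp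
qed

lemma semistandard_phi: "semistandard (n-k) n d (phi k n d m)"
  unfolding semistandard_def
proof (intro conjI allI impI)
  fix i j assume i: "i < n - k" and j: "j < d"
  then show "phi k n d m i j \<in> {1..n}"
    using col_set_phi[OF j] unfolding col_set_def dual_col_def by blast
next
  fix i j assume "i + 1 < n - k" "j < d"
  then show "phi k n d m i j < phi k n d m (i+1) j"
    using sorted_list_of_set_nth_less[OF finite_dual_col] card_dual_col phi_eq_nth by simp
next
  fix i j assume "i < n - k" "j + 1 < d"
  then show "phi k n d m i j \<le> phi k n d m i (j+1)"
    by (rule phi_row_le)
qed

lemma phi_max_cols:
  assumes j0: "\<forall>j<d. m (k-1) j = n \<longleftrightarrow> j0 \<le> j" "j0 \<le> d"
  shows "\<forall>j<d. phi k n d m (n-k-1) j = n \<longleftrightarrow> d - j0 \<le> j"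
proof (intro allI impI)
  fix j assume j: "j < d"
  have "phi k n d m (n-k-1) j = n \<longleftrightarrow> n \<in> col_set (n-k) (phi k n d m) j"
    using semistandard_max_in_col[OF semistandard_phi _ j] k_less by simp
  also have "\<dots> \<longleftrightarrow> n \<notin> col_set k m (d-1-j)"
    using col_set_phi[OF j] k_less by (simp add: dual_col_def)
  also have "\<dots> \<longleftrightarrow> m (k-1) (d-1-j) \<noteq> n"
    using semistandard_max_in_col[OF ss, of "d-1-j"] k_pos j by simp
  also have "\<dots> \<longleftrightarrow> d - j0 \<le> j"
    using j0 j by auto
  finally show "phi k n d m (n-k-1) j = n \<longleftrightarrow> d - j0 \<le> j" .
qed

text \<open>Blanking the entries \<open>n\<close> turns complementation in \<open>[n]\<close> into
  complementation in \<open>{0..<n}\<close>, the hole 0 standing for \<open>n\<close>.\<close>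

lemma complementary_blank_max:
  "complementary_cols n d (col_set k (blank_max k n d m))
     (col_set (n-k) (blank_max (n-k) n d (phi k n d m)))"
proof -
  let ?r = "\<lambda>x. if x = n then 0 else x"
  have blank: "col_set p (blank_max p n d T) j = ?r ` col_set p T j" if "j < d" for p T j
    using that unfolding col_set_eq_image image_image by (intro image_cong) (auto simp: blank_max_def)
  have r_img: "?r ` {1..n} = {0..<n}"
    using k_less by (auto simp: image_iff)
  have "inj_on ?r {1..n}"
    by (rule inj_onI) (auto split: if_splits)
  then have r_diff: "?r ` ({1..n} - X) = {0..<n} - ?r ` X" if "X \<subseteq> {1..n}" for X
    using that r_img by (subst inj_on_image_set_diff) auto
  show ?thesis
    unfolding complementary_cols_def
  proof (intro allI impI conjI)
    fix j assume j: "j < d"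
    show "col_set k (blank_max k n d m) j \<subseteq> {0..<n}"
      using blank[OF j] semistandard_col_set(1)[OF ss j] r_img by auto
    show "col_set (n-k) (blank_max (n-k) n d (phi k n d m)) j
        = {0..<n} - col_set k (blank_max k n d m) (d-1-j)"
      using blank[OF j] blank[of "d-1-j"] col_set_phi[OF j] r_diff semistandard_col_set(1)[OF ss] j
      by (simp add: dual_col_def)
  qed
qed

end

section \<open>Commutation of complementation and promotion\<close>

text \<open>Complementation turns the exchange at column \<open>c\<close> into the one at
  \<open>d - c\<close>, so the word of the first promotion becomes the grid word read row by row,
  while the word of the second promotion is the same grid read column by column.\<close>

lemma prom_word_complementary:
  assumes "j0 \<le> d" "complementary_cols n d A B" "0 < n"
  shows "complementary_cols n d (exchanges (prom_word j0 (d - j0)) A)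
           (exchanges (prom_word (d - j0) j0) B)"
proof -
  have "map (\<lambda>c. d - c) (map (\<lambda>u. j0 + t - u) [0..<j0]) = map (\<lambda>u. (d - j0) - t + u) [0..<j0]"
    if "t < d - j0" for t
    using that assms(1) by (intro nth_equalityI) auto
  then have rows: "map (\<lambda>c. d - c) (prom_word j0 (d - j0)) = grid_word_rows (d - j0) j0 (d - j0)"
    unfolding prom_word_def grid_word_rows_def map_concat map_map
    by (intro arg_cong[where f=concat] map_cong) (simp_all add: comp_def)
  have cols: "prom_word (d - j0) j0 = grid_word_cols (d - j0) j0 (d - j0)"
    unfolding prom_word_def grid_word_cols_def
    by (intro arg_cong[where f=concat] map_cong refl) auto
  have "\<forall>c\<in>set (prom_word j0 (d - j0)). 1 \<le> c \<and> c < d"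
    using assms(1) by (auto simp: prom_word_def)
  from complementary_exchanges[OF assms(2) this assms(3)] show ?thesis
    unfolding rows cols exchanges_grid_word_cols[OF order_refl] .
qed

lemma phi_of_complementary_cols:
  assumes compl: "complementary_cols n d (col_set k F) (col_set (n-k) G)"
    and F: "\<And>j. j < d \<Longrightarrow> col_set k F j \<subseteq> {0..<n}"
    and G: "\<And>i j. i < n - k \<Longrightarrow> j < d \<Longrightarrow> G i j = sorted_list_of_set (col_set (n-k) G j) ! i"
    "\<And>j. j < d \<Longrightarrow> card (col_set (n-k) G j) = n - k"
  shows "phi k n d (\<lambda>i j. if i < k \<and> j < d then F i j + 1 else 0)
       = (\<lambda>i j. if i < n - k \<and> j < d then G i j + 1 else 0)"
proof (intro ext)
  fix i j
  show "phi k n d (\<lambda>i j. if i < k \<and> j < d then F i j + 1 else 0) i j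
      = (if i < n - k \<and> j < d then G i j + 1 else 0)"
  proof (cases "i < n - k \<and> j < d")
    case True
    then have i: "i < n - k" and j: "j < d" "d - 1 - j < d"
      by auto
    let ?C = "col_set k F (d-1-j)"
    have "col_set k (\<lambda>i j. if i < k \<and> j < d then F i j + 1 else 0) (d-1-j) = Suc ` ?C"
      using j by (auto simp: col_set_eq_image)
    moreover have "col_set (n-k) G j = {0..<n} - ?C"
      using compl j unfolding complementary_cols_def by blast
    ultimately show ?thesis
      using i j diff_image_Suc[OF F[OF j(2)]] G(1)[OF i j(1)] G(2)[OF j(1)]
      by (simp add: phi_def sorted_list_of_set_image_Suc)
  qed (auto simp: phi_def)
qed

theorem lemma6p3:
  fixes k n d :: nat and m :: "nat \<Rightarrow> nat \<Rightarrow> nat"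
  assumes "1 \<le> k" and "k < n" and "1 \<le> d"
    and "semistandard k n d m"
  shows "phi k n d (prom k n d m) = prom (n - k) n d (phi k n d m)"
proof -
  note ss = assms(4) and ss' = semistandard_phi[OF assms(1,2,4)]
  have pos: "0 < k" "0 < n - k"
    using assms(1,2) by simp_all
  obtain j0 where j0: "j0 \<le> d" "\<forall>j<d. m (k-1) j = n \<longleftrightarrow> j0 \<le> j"
    using semistandard_max_cols[OF ss] assms(1) by auto
  obtain F where F: "prom k n d m = (\<lambda>i j. if i < k \<and> j < d then F i j + 1 else 0)"
    "col_set k F = exchanges (prom_word j0 (d - j0)) (col_set k (blank_max k n d m))"
    "\<And>j. j < d \<Longrightarrow> col_set k F j \<subseteq> {0..<n}"
    by (rule prom_columns[OF ss pos(1) j0(2,1)]) auto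
  obtain G where G: "prom (n-k) n d (phi k n d m) = (\<lambda>i j. if i < n-k \<and> j < d then G i j + 1 else 0)"
    "\<And>i j. i < n - k \<Longrightarrow> j < d \<Longrightarrow> G i j = sorted_list_of_set (col_set (n-k) G j) ! i"
    "col_set (n-k) G
       = exchanges (prom_word (d - j0) (d - (d - j0))) (col_set (n-k) (blank_max (n-k) n d (phi k n d m)))"
    "\<And>j. j < d \<Longrightarrow> card (col_set (n-k) G j) = n - k"
    by (rule prom_columns[OF ss' pos(2) phi_max_cols[OF assms(1,2,4) j0(2,1)]]) auto
  have "complementary_cols n d (col_set k F) (col_set (n-k) G)"
    using prom_word_complementary[OF j0(1) complementary_blank_max[OF assms(1,2,4)]] F(2) G(3) j0(1)
      assms(2) by simp
  then show ?thesis
    unfolding F(1) G(1) using F(3) G(2,4) by (rule phi_of_complementary_cols)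
qed

end
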